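(* Let $M\in\mathbb{N}^*$ and $0<\beta_1<\beta_2<4(2+\sqrt{3})$. Then there exist $\tau>0$ and a set $\mathcal{B}\subset[\beta_1,\beta_2]$ of Lebesgue measure zero such that for every $\beta\in[\beta_1,\beta_2]\setminus\mathcal{B}$ and every $\gamma>0$ the following holds: there is $\nu>0$ such that for every multi-index $(\alpha,\alpha')\in\mathbb{N}^{\mathbb{Z}^*}\times\mathbb{N}^{\mathbb{Z}^*}$ with $|\alpha+\alpha'|\leq M$ which is not super-action preserving, $$\Big|\sum_{j\in\mathbb{Z}^*}\omega(j)\,(\alpha_j-\alpha'_j)\Big|\geq\frac{\nu}{\Big(\max_{j\in\mathrm{supp}(\alpha)\cup\mathrm{supp}(\alpha')}|j|\Big)^{\tau}},$$ where $$\omega(j)=\sqrt{\frac{\gamma|j|}{2}}\sqrt{|j|^2-\frac{\beta}{2}|j|+\beta-1},\qquad j\in\mathbb{Z}^*.$$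
   Context: $\mathbb{N}=\{0,1,2,\dots\}$, $\mathbb{N}^*=\mathbb{N}\setminus\{0\}$, $\mathbb{Z}^*=\mathbb{Z}\setminus\{0\}$. For $\alpha\in\mathbb{N}^{\mathbb{Z}^*}$, $|\alpha|=\sum_{j\in\mathbb{Z}^*}\alpha_j$ and $\mathrm{supp}(\alpha)=\{j:\alpha_j\neq0\}$. A multi-index $(\alpha,\alpha')\in\mathbb{N}^{\mathbb{Z}^*}\times\mathbb{N}^{\mathbb{Z}^*}$ is called super-action preserving if $\alpha_n+\alpha_{-n}=\alpha'_n+\alpha'_{-n}$ for all $n\in\mathbb{N}^*$. For $0<\beta<4(2+\sqrt3)$ the quantity under the second square root in $\omega(j)$ is positive for all $j\in\mathbb{Z}^*$, so $\omega(j)$ is real (these are the linear frequencies of the Kelvin–Helmholtz vortex sheet at the circle, with $\gamma$ the surface tension and $\beta=\mu^2/\gamma$ the Weber number, $\mu$ the velocity jump). *)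

theory Defs
  imports "HOL-Analysis.Analysis"
begin

text \<open>Multi-indices in N^(Z*): functions int => nat vanishing at 0 with finite support.\<close>
definition multi_index :: "(int \<Rightarrow> nat) \<Rightarrow> bool" where
  "multi_index a \<longleftrightarrow> a 0 = 0 \<and> finite {j. a j \<noteq> 0}"

definition supp_mi :: "(int \<Rightarrow> nat) \<Rightarrow> int set" where
  "supp_mi a = {j. a j \<noteq> 0}"

definition mi_len :: "(int \<Rightarrow> nat) \<Rightarrow> nat" where
  "mi_len a = (\<Sum>j\<in>supp_mi a. a j)"

definition super_action_preserving :: "(int \<Rightarrow> nat) \<Rightarrow> (int \<Rightarrow> nat) \<Rightarrow> bool" where
  "super_action_preserving a a' \<longleftrightarrow>
     (\<forall>n::nat. n \<ge> 1 \<longrightarrow> a (int n) + a (- int n) = a' (int n) + a' (- int n))"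

definition omega :: "real \<Rightarrow> real \<Rightarrow> int \<Rightarrow> real" where
  "omega \<beta> \<gamma> j = sqrt (\<gamma> * \<bar>real_of_int j\<bar> / 2) *
      sqrt (\<bar>real_of_int j\<bar>^2 - \<beta> / 2 * \<bar>real_of_int j\<bar> + \<beta> - 1)"

end

theory Submission
  imports Defs "HOL-Computational_Algebra.Fundamental_Theorem_Algebra"
begin

(* With r n \<beta> = sqrt (2 n^3 - 2 n - n (n - 2) \<beta>) one has \<omega>(j) = sqrt \<gamma> / 2 * r |j| \<beta>, so the
   small divisor is sqrt \<gamma> / 2 times an integer linear form F = \<Sum> c n * r n \<beta> with \<Sum> |c n| \<le> M,
   and some c n \<noteq> 0 exactly when the multi-index is not super-action preserving.
   Multiplying F over all sign changes of the square roots gives an integer polynomial P of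
   degree at most 2^M with |P| \<le> |F| K^(2^M - 1), where K bounds all these conjugates of F.
   P is not zero because the r n are linearly independent over the integers on every interval:
   the successive \<beta>-derivatives of a vanishing combination form a Vandermonde system, and the
   only proportional pair is r 5 = sqrt 5 * r 3.
   A nonzero integer polynomial of degree D is below \<delta> only within \<delta>^(1/D) of one of its
   complex roots, so on a set of measure O(D \<delta>^(1/D)). Summing over the O(N^M) forms whose
   indices are at most N with threshold (N^(M+4) (k+1))^(-2^M) gives measure O(1/(k+1)), and
   the intersection over k of these resonant sets is the null set B. *)

section \<open>The frequencies\<close>

definition rad_const :: "nat \<Rightarrow> real" where
  "rad_const n = 2 * real n ^ 3 - 2 * real n"

definition rad_slope :: "nat \<Rightarrow> real" where
  "rad_slope n = real n * (real n - 2)"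

definition rad :: "nat \<Rightarrow> real \<Rightarrow> real" where
  "rad n \<beta> = rad_const n - rad_slope n * \<beta>"

definition freq :: "nat \<Rightarrow> real \<Rightarrow> real" where
  "freq n \<beta> = sqrt (rad n \<beta>)"

lemma omega_eq_freq: "omega \<beta> \<gamma> j = sqrt \<gamma> / 2 * freq (nat \<bar>j\<bar>) \<beta>"
proof -
  have n: "real (nat \<bar>j\<bar>) = real_of_int \<bar>j\<bar>" by simp
  have "omega \<beta> \<gamma> j = sqrt (\<gamma> * \<bar>real_of_int j\<bar> / 2 * (\<bar>real_of_int j\<bar>^2 - \<beta> / 2 * \<bar>real_of_int j\<bar> + \<beta> - 1))"
    unfolding omega_def by (simp only: real_sqrt_mult)
  also have "\<gamma> * \<bar>real_of_int j\<bar> / 2 * (\<bar>real_of_int j\<bar>^2 - \<beta> / 2 * \<bar>real_of_int j\<bar> + \<beta> - 1)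
      = \<gamma> / 4 * rad (nat \<bar>j\<bar>) \<beta>"
    unfolding rad_def rad_const_def rad_slope_def n
    by (simp add: algebra_simps power2_eq_square power3_eq_cube)
  also have "sqrt (\<gamma> / 4 * rad (nat \<bar>j\<bar>) \<beta>) = sqrt \<gamma> / 2 * freq (nat \<bar>j\<bar>) \<beta>"
    unfolding freq_def by (simp add: real_sqrt_mult real_sqrt_divide)
  finally show ?thesis .
qed

text \<open>For integer \<open>n\<close> the radicands stay nonnegative up to \<open>\<beta> = 15\<close> (where \<open>rad 4\<close>
  vanishes), slightly beyond \<open>4 (2 + sqrt 3)\<close>; so \<open>15\<close> serves as the upper bound below.\<close>

lemma rad_nonneg:
  assumes "0 \<le> \<beta>" "\<beta> \<le> 15"
  shows "0 \<le> rad n \<beta>"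
proof -
  consider "n \<le> 2" | "n = 3" | "n \<ge> 4" by linarith
  then show ?thesis
  proof cases
    case 1
    then have "n = 0 \<or> n = 1 \<or> n = 2" by auto
    then show ?thesis using assms by (auto simp: rad_def rad_const_def rad_slope_def)
  next
    case 2
    then show ?thesis using assms by (simp add: rad_def rad_const_def rad_slope_def)
  next
    case 3
    have "rad_slope n * \<beta> \<le> rad_slope n * 15"
      using 3 assms unfolding rad_slope_def by (intro mult_left_mono) auto
    moreover have "rad_const n - rad_slope n * 15 = real n * ((2 * real n - 7) * (real n - 4))"
      unfolding rad_const_def rad_slope_def by (simp add: algebra_simps power3_eq_cube)
    moreover have "0 \<le> real n * ((2 * real n - 7) * (real n - 4))"
      using 3 by simp
    ultimately show ?thesis unfolding rad_def by linarith
  qed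
qed

lemma rad_pos:
  assumes "0 < \<beta>" "\<beta> < 15" "1 \<le> n"
  shows "0 < rad n \<beta>"
proof (cases "n \<le> 2")
  case True
  then have "n = 1 \<or> n = 2" using assms(3) by auto
  then show ?thesis using assms by (auto simp: rad_def rad_const_def rad_slope_def)
next
  case False
  then have "rad_slope n * \<beta> < rad_slope n * 15"
    using assms unfolding rad_slope_def by (intro mult_strict_left_mono) auto
  moreover have "0 \<le> rad n 15" by (rule rad_nonneg) auto
  ultimately show ?thesis unfolding rad_def by linarith
qed

lemma freq_pos: "0 < \<beta> \<Longrightarrow> \<beta> < 15 \<Longrightarrow> 1 \<le> n \<Longrightarrow> 0 < freq n \<beta>"
  unfolding freq_def using rad_pos by simp

lemma freq_nonneg: "0 \<le> \<beta> \<Longrightarrow> \<beta> \<le> 15 \<Longrightarrow> 0 \<le> freq n \<beta>"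
  unfolding freq_def using rad_nonneg by simp

lemma freq_squared: "0 \<le> \<beta> \<Longrightarrow> \<beta> \<le> 15 \<Longrightarrow> (freq n \<beta>)\<^sup>2 = rad n \<beta>"
  unfolding freq_def using rad_nonneg by simp

lemma continuous_on_freq [continuous_intros]: "continuous_on A (freq n)"
  unfolding freq_def rad_def by (intro continuous_intros)

lemma freq_le:
  assumes "0 \<le> \<beta>" "\<beta> \<le> 15"
  shows "freq n \<beta> \<le> 5 * real n ^ 2"
proof -
  have "rad n \<beta> \<le> (5 * real n ^ 2)\<^sup>2"
  proof (cases "n \<le> 1")
    case True
    then have "n = 0 \<or> n = 1" by auto
    then show ?thesis using assms by (auto simp: rad_def rad_const_def rad_slope_def)
  next
    case False
    have "0 \<le> rad_slope n * \<beta>" using False assms unfolding rad_slope_def by simp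
    moreover have "real n ^ 3 \<le> real n ^ 4" using False by (intro power_increasing) auto
    moreover have "(5 * real n ^ 2)\<^sup>2 = 25 * real n ^ 4"
      by (simp add: power_mult_distrib flip: power_mult)
    moreover have "0 \<le> real n" "0 \<le> real n ^ 4" by simp_all
    ultimately show ?thesis unfolding rad_def rad_const_def by linarith
  qed
  then have "freq n \<beta> \<le> sqrt ((5 * real n ^ 2)\<^sup>2)" unfolding freq_def by (rule real_sqrt_le_mono)
  also have "sqrt ((5 * real n ^ 2)\<^sup>2) = 5 * real n ^ 2" by (rule real_sqrt_unique) auto
  finally show ?thesis .
qed

lemma freq_5_eq: "freq 5 \<beta> = sqrt 5 * freq 3 \<beta>"
proof -
  have "rad 5 \<beta> = 5 * rad 3 \<beta>" unfolding rad_def rad_const_def rad_slope_def by simp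
  then show ?thesis unfolding freq_def by (simp only: real_sqrt_mult)
qed

section \<open>Linear independence of the frequencies over the integers\<close>

lemma square_eq_5_square_imp_0:
  fixes m n :: int
  assumes "m\<^sup>2 = 5 * n\<^sup>2"
  shows "n = 0"
proof (rule ccontr)
  assume "n \<noteq> 0"
  then have "m \<noteq> 0" using assms by auto
  have p: "prime (5::int)" by simp
  have "multiplicity 5 (m\<^sup>2) = 2 * multiplicity 5 m"
    using p \<open>m \<noteq> 0\<close> by (simp add: prime_elem_multiplicity_power_distrib)
  moreover have "multiplicity 5 (5 * n\<^sup>2) = Suc (2 * multiplicity 5 n)"
    using p \<open>n \<noteq> 0\<close>
    by (simp add: prime_elem_multiplicity_mult_distrib prime_elem_multiplicity_power_distrib)
  ultimately have "2 * multiplicity 5 m = Suc (2 * multiplicity 5 n)" using assms by simp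
  then show False by presburger
qed

lemma Ints_plus_sqrt_5_times_eq_0:
  assumes "x \<in> \<int>" "y \<in> \<int>" "x + sqrt 5 * y = 0"
  shows "x = 0 \<and> y = 0"
proof -
  obtain m n where mn: "x = of_int m" "y = of_int n" using assms(1,2) by (auto elim!: Ints_cases)
  have "x\<^sup>2 = 5 * y\<^sup>2" using assms(3) by (simp add: eq_neg_iff_add_eq_0[symmetric] power_mult_distrib)
  then have "m\<^sup>2 = 5 * n\<^sup>2" unfolding mn by (metis of_int_eq_iff of_int_mult of_int_numeral of_int_power)
  then have "y = 0" using square_eq_5_square_imp_0 mn by simp
  then show ?thesis using assms(3) by simp
qed

lemma rad_proportional_imp_3_5:
  assumes "1 \<le> n" "1 \<le> m" "n \<noteq> m" "rad_slope n * rad_const m = rad_slope m * rad_const n"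
  shows "{n, m} = {3, 5}"
proof -
  have "rad_slope n * rad_const m - rad_slope m * rad_const n
      = 2 * real n * real m * (real m - real n) * (real_of_int ((int n - 2) * (int m - 2)) - 3)"
    unfolding rad_const_def rad_slope_def by (simp add: algebra_simps power3_eq_cube)
  then have "real_of_int ((int n - 2) * (int m - 2)) = 3" using assms by simp
  then have "(int n - 2) * (int m - 2) = 3" by (simp only: of_int_eq_numeral_iff)
  moreover define u v where "u = int n - 2" and "v = int m - 2"
  ultimately have uv: "u * v = 3" and "-1 \<le> u" "-1 \<le> v" using assms by auto
  then have "0 < u" by (cases "u = -1"; cases "u = 0") auto
  then have "0 < v" using zero_less_mult_pos[of u v] uv by simp
  then have "u * 1 \<le> u * v" using \<open>0 < u\<close> by (intro mult_left_mono) auto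
  then have "u \<le> 3" using uv by simp
  moreover have "u \<noteq> 2"
  proof
    assume "u = 2"
    with uv have "2 * v = 3" by simp
    then show False by presburger
  qed
  ultimately have "u = 1 \<or> u = 3" using \<open>0 < u\<close> by auto
  then have "(u = 1 \<and> v = 3) \<or> (u = 3 \<and> v = 1)" using uv by auto
  then show ?thesis unfolding u_def v_def by auto
qed

text \<open>Up to a constant factor, \<open>freq_deriv_comb S e k\<close> is the \<open>k\<close>-th derivative of
  \<open>\<lambda>\<beta>. \<Sum>n\<in>S. e n * freq n \<beta>\<close>.\<close>

definition freq_deriv_comb :: "nat set \<Rightarrow> (nat \<Rightarrow> real) \<Rightarrow> nat \<Rightarrow> real \<Rightarrow> real" where
  "freq_deriv_comb S e k \<beta> = (\<Sum>n\<in>S. e n * (- rad_slope n) ^ k * rad n \<beta> powr (1/2 - real k))"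

lemma has_real_derivative_freq_deriv_comb:
  assumes "0 \<notin> S" "0 < \<beta>" "\<beta> < 15"
  shows "(freq_deriv_comb S e k has_real_derivative
           (1/2 - real k) * freq_deriv_comb S e (Suc k) \<beta>) (at \<beta>)"
proof -
  have "((\<lambda>x. e n * (- rad_slope n) ^ k * rad n x powr (1/2 - real k)) has_real_derivative
        (1/2 - real k) * (e n * (- rad_slope n) ^ Suc k * rad n \<beta> powr (1/2 - real (Suc k)))) (at \<beta>)"
    if "n \<in> S" for n
  proof -
    have "0 < rad n \<beta>" using that assms by (intro rad_pos) (auto simp: Suc_le_eq intro: gr0I)
    moreover have "(rad n has_real_derivative - rad_slope n) (at \<beta>)"
      unfolding rad_def by (auto intro!: derivative_eq_intros)
    ultimately have "((\<lambda>x. rad n x powr (1/2 - real k)) has_real_derivative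
        (1/2 - real k) * rad n \<beta> powr (1/2 - real k - 1) * - rad_slope n) (at \<beta>)"
      using DERIV_fun_powr[of "rad n" "- rad_slope n" \<beta> "1/2 - real k"] by simp
    then show ?thesis
      by (auto intro!: derivative_eq_intros elim!: DERIV_cong simp: algebra_simps)
  qed
  then show ?thesis
    unfolding freq_deriv_comb_def sum_distrib_left by (intro DERIV_sum) auto
qed

lemma freq_deriv_comb_eq_0:
  assumes "0 \<notin> S" "0 \<le> a" "b \<le> 15" "\<forall>\<beta>\<in>{a<..<b}. freq_deriv_comb S e 0 \<beta> = 0"
  shows "\<forall>\<beta>\<in>{a<..<b}. freq_deriv_comb S e k \<beta> = 0"
proof (induction k)
  case 0
  then show ?case using assms by simp
next
  case (Suc k)
  show ?case
  proof
    fix \<beta> assume \<beta>: "\<beta> \<in> {a<..<b}"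
    have "(freq_deriv_comb S e k has_real_derivative
            (1/2 - real k) * freq_deriv_comb S e (Suc k) \<beta>) (at \<beta>)"
      using has_real_derivative_freq_deriv_comb \<beta> assms by auto
    moreover have "(freq_deriv_comb S e k has_real_derivative 0) (at \<beta>)"
      by (rule has_field_derivative_transform_within_open[where f = "\<lambda>_. 0" and S = "{a<..<b}"])
        (use \<beta> Suc in auto)
    ultimately have "(1/2 - real k) * freq_deriv_comb S e (Suc k) \<beta> = 0"
      by (rule DERIV_unique)
    moreover have "1/2 - real k \<noteq> 0" by (cases k) auto
    ultimately show "freq_deriv_comb S e (Suc k) \<beta> = 0" by simp
  qed
qed

lemma freq_comb_moments_eq_0:
  assumes "0 \<notin> S" "0 \<le> a" "b \<le> 15" "\<forall>\<beta>\<in>{a<..<b}. (\<Sum>n\<in>S. e n * freq n \<beta>) = 0"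
    and "\<beta> \<in> {a<..<b}"
  shows "(\<Sum>n\<in>S. e n * freq n \<beta> * (- rad_slope n / rad n \<beta>) ^ k) = 0"
proof -
  have "freq_deriv_comb S e 0 \<beta>' = (\<Sum>n\<in>S. e n * freq n \<beta>')" if "\<beta>' \<in> {a<..<b}" for \<beta>'
    unfolding freq_deriv_comb_def freq_def
    using that assms rad_nonneg[of \<beta>'] by (intro sum.cong) (auto simp: powr_half_sqrt)
  then have "freq_deriv_comb S e k \<beta> = 0"
    using freq_deriv_comb_eq_0[OF assms(1-3)] assms(4,5) by simp
  moreover have "freq_deriv_comb S e k \<beta> = (\<Sum>n\<in>S. e n * freq n \<beta> * (- rad_slope n / rad n \<beta>) ^ k)"
    unfolding freq_deriv_comb_def
  proof (intro sum.cong refl)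
    fix n assume "n \<in> S"
    then have "0 < rad n \<beta>" using assms by (intro rad_pos) (auto simp: Suc_le_eq intro: gr0I)
    then have "rad n \<beta> powr (1/2 - real k) = freq n \<beta> / rad n \<beta> ^ k"
      unfolding freq_def by (simp add: powr_diff powr_half_sqrt powr_realpow)
    then show "e n * (- rad_slope n) ^ k * rad n \<beta> powr (1/2 - real k)
        = e n * freq n \<beta> * (- rad_slope n / rad n \<beta>) ^ k"
      unfolding power_divide by simp
  qed
  ultimately show ?thesis by simp
qed

lemma sum_powers_eq_0_imp_level_sum_eq_0:
  fixes x z :: "'a \<Rightarrow> 'b::idom"
  assumes "finite S" "\<And>k. (\<Sum>n\<in>S. x n * z n ^ k) = 0" "m \<in> S"
  shows "(\<Sum>n | n \<in> S \<and> z n = z m. x n) = 0"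
proof -
  have poly_sum: "(\<Sum>n\<in>S. x n * poly p (z n)) = 0" for p
  proof -
    have "(\<Sum>n\<in>S. x n * poly p (z n)) = (\<Sum>i\<le>degree p. coeff p i * (\<Sum>n\<in>S. x n * z n ^ i))"
      by (simp add: poly_altdef sum_distrib_left algebra_simps sum.swap[of _ S])
    then show ?thesis using assms(2) by simp
  qed
  define Y where "Y = z ` S - {z m}"
  define p where "p = (\<Prod>y\<in>Y. [:- y, 1:])"
  have poly_p: "poly p t = (\<Prod>y\<in>Y. t - y)" for t unfolding p_def by (simp add: poly_prod)
  have "finite Y" using assms(1) unfolding Y_def by simp
  then have p_zm: "poly p (z m) \<noteq> 0" unfolding poly_p Y_def by auto
  have "poly p (z n) = 0" if "n \<in> S" "z n \<noteq> z m" for n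
    using that \<open>finite Y\<close> unfolding poly_p Y_def by auto
  then have "(\<Sum>n\<in>S. x n * poly p (z n)) = (\<Sum>n\<in>S. if z n = z m then x n * poly p (z m) else 0)"
    by (intro sum.cong) auto
  also have "\<dots> = (\<Sum>n | n \<in> S \<and> z n = z m. x n) * poly p (z m)"
    using assms(1) by (simp add: sum.inter_filter[symmetric] sum_distrib_right)
  finally show ?thesis using poly_sum p_zm assms(3) by simp
qed

lemma freq_int_comb_eq_0_imp_coeffs_eq_0:
  assumes "finite S" "0 \<notin> S" "\<forall>n\<in>S. e n \<in> \<int>" "0 \<le> a" "a < b" "b \<le> 15"
    and "\<forall>\<beta>\<in>{a<..<b}. (\<Sum>n\<in>S. e n * freq n \<beta>) = 0"
  shows "\<forall>n\<in>S. e n = 0"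
proof
  define \<beta> where "\<beta> = (a + b) / 2"
  have \<beta>: "\<beta> \<in> {a<..<b}" "0 < \<beta>" "\<beta> < 15" using assms(4-6) unfolding \<beta>_def by auto
  have pos: "1 \<le> n" if "n \<in> S" for n using that assms(2) by (cases n) auto
  define z where "z n = - rad_slope n / rad n \<beta>" for n
  have level_sum: "(\<Sum>n | n \<in> S \<and> z n = z m. e n * freq n \<beta>) = 0" if "m \<in> S" for m
    using freq_comb_moments_eq_0[OF assms(2,4,6,7) \<beta>(1)] assms(1) that
    unfolding z_def by (intro sum_powers_eq_0_imp_level_sum_eq_0) auto
  have z_eq: "z n = z m \<longleftrightarrow> {n, m} = {3, 5}" if "n \<in> S" "m \<in> S" "n \<noteq> m" for n m
  proof -
    have "rad n \<beta> \<noteq> 0" "rad m \<beta> \<noteq> 0" using rad_pos[OF \<beta>(2,3)] pos that by (metis less_irrefl)+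
    then have "z n = z m \<longleftrightarrow> rad_slope n * rad m \<beta> = rad_slope m * rad n \<beta>"
      unfolding z_def by (simp add: frac_eq_eq)
    also have "\<dots> \<longleftrightarrow> rad_slope n * rad_const m = rad_slope m * rad_const n"
      unfolding rad_def by (auto simp: algebra_simps)
    also have "\<dots> \<longleftrightarrow> {n, m} = {3, 5}"
      using rad_proportional_imp_3_5 pos that
      by (auto simp: rad_const_def rad_slope_def doubleton_eq_iff)
    finally show ?thesis .
  qed
  fix m assume m: "m \<in> S"
  show "e m = 0"
  proof (cases "{3, 5} \<subseteq> S \<and> m \<in> {3, 5}")
    case False
    then have "{n. n \<in> S \<and> z n = z m} = {m}"
      using z_eq m by (auto simp: doubleton_eq_iff)
    then have "e m * freq m \<beta> = 0" using level_sum[OF m] by simp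
    then show ?thesis using freq_pos[OF \<beta>(2,3) pos[OF m]] by simp
  next
    case True
    then have "{n. n \<in> S \<and> z n = z m} = {3, 5}"
      using z_eq m by (auto simp: doubleton_eq_iff)
    then have "(e 3 + sqrt 5 * e 5) * freq 3 \<beta> = 0"
      using level_sum[OF m] by (simp add: freq_5_eq algebra_simps)
    then have "e 3 + sqrt 5 * e 5 = 0" using freq_pos[OF \<beta>(2,3), of 3] by simp
    then show ?thesis using Ints_plus_sqrt_5_times_eq_0 True assms(3) by auto
  qed
qed

section \<open>Eliminating the square roots\<close>

definition int_poly :: "real poly \<Rightarrow> bool" where
  "int_poly p \<longleftrightarrow> (\<forall>i. coeff p i \<in> \<int>)"

lemma int_poly_add: "int_poly p \<Longrightarrow> int_poly q \<Longrightarrow> int_poly (p + q)"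
  unfolding int_poly_def by (auto simp: coeff_add)

lemma int_poly_mult: "int_poly p \<Longrightarrow> int_poly q \<Longrightarrow> int_poly (p * q)"
  unfolding int_poly_def by (auto simp: coeff_mult intro!: Ints_sum Ints_mult)

lemma int_poly_minus: "int_poly p \<Longrightarrow> int_poly (- p)"
  unfolding int_poly_def by (auto simp: coeff_minus)

lemma int_poly_const: "c \<in> \<int> \<Longrightarrow> int_poly [:c:]"
  unfolding int_poly_def by (auto simp: coeff_pCons split: nat.splits)

definition rad_poly :: "nat \<Rightarrow> real poly" where
  "rad_poly n = [:rad_const n, - rad_slope n:]"

lemma poly_rad_poly: "poly (rad_poly n) \<beta> = rad n \<beta>"
  unfolding rad_poly_def rad_def by (simp add: algebra_simps)

lemma int_poly_rad_poly: "int_poly (rad_poly n)"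
  unfolding int_poly_def rad_poly_def rad_const_def rad_slope_def
  by (auto simp: coeff_pCons split: nat.splits intro!: Ints_diff Ints_mult Ints_power)

lemma degree_rad_poly: "degree (rad_poly n) \<le> 1"
  unfolding rad_poly_def by simp

definition rad_roots :: "(nat \<Rightarrow> real) \<Rightarrow> real \<Rightarrow> bool" where
  "rad_roots \<rho> \<beta> \<longleftrightarrow> (\<forall>n. (\<rho> n)\<^sup>2 = rad n \<beta>)"

lemma rad_roots_flip: "rad_roots \<rho> \<beta> \<Longrightarrow> rad_roots (\<rho>(m := - \<rho> m)) \<beta>"
  unfolding rad_roots_def by auto

lemma rad_roots_freq: "0 \<le> \<beta> \<Longrightarrow> \<beta> \<le> 15 \<Longrightarrow> rad_roots (\<lambda>n. freq n \<beta>) \<beta>"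
  unfolding rad_roots_def using freq_squared by simp

text \<open>\<open>rad_expr T f k\<close>: \<open>f \<rho> \<beta>\<close> is an integer polynomial in \<open>\<beta>\<close> and the \<open>\<rho> n\<close>, \<open>n \<in> T\<close>,
  of degree at most \<open>k\<close> when \<open>\<beta>\<close> has weight 2 and each \<open>\<rho> n\<close> weight 1, the weights of the
  relation \<open>(\<rho> n)\<^sup>2 = rad n \<beta>\<close>.\<close>

inductive rad_expr :: "nat set \<Rightarrow> ((nat \<Rightarrow> real) \<Rightarrow> real \<Rightarrow> real) \<Rightarrow> nat \<Rightarrow> bool" for T where
  poly: "int_poly p \<Longrightarrow> 2 * degree p \<le> k \<Longrightarrow> rad_expr T (\<lambda>\<rho> \<beta>. poly p \<beta>) k"
| var: "n \<in> T \<Longrightarrow> 1 \<le> k \<Longrightarrow> rad_expr T (\<lambda>\<rho> \<beta>. \<rho> n) k"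
| add: "rad_expr T f k \<Longrightarrow> rad_expr T g k \<Longrightarrow> rad_expr T (\<lambda>\<rho> \<beta>. f \<rho> \<beta> + g \<rho> \<beta>) k"
| mult: "rad_expr T f k1 \<Longrightarrow> rad_expr T g k2 \<Longrightarrow> k1 + k2 \<le> k \<Longrightarrow>
    rad_expr T (\<lambda>\<rho> \<beta>. f \<rho> \<beta> * g \<rho> \<beta>) k"

lemma rad_expr_const: "c \<in> \<int> \<Longrightarrow> rad_expr T (\<lambda>\<rho> \<beta>. c) k"
  using rad_expr.poly[of "[:c:]" k T] int_poly_const[of c] by simp

lemma rad_expr_zero: "rad_expr T (\<lambda>\<rho> \<beta>. 0) k"
  using rad_expr_const[of 0] by simp

lemma rad_expr_rad: "rad_expr T (\<lambda>\<rho> \<beta>. rad m \<beta>) 2"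
  using rad_expr.poly[OF int_poly_rad_poly, of m 2 T] degree_rad_poly[of m]
  by (simp add: poly_rad_poly)

lemma rad_expr_cong: "rad_expr T f k \<Longrightarrow> \<forall>n\<in>T. \<rho> n = \<rho>' n \<Longrightarrow> f \<rho> \<beta> = f \<rho>' \<beta>"
  by (induction rule: rad_expr.induct) auto

lemma rad_expr_linear:
  assumes "finite S" "\<forall>n\<in>S. c n \<in> \<int>"
  shows "rad_expr S (\<lambda>\<rho> \<beta>. \<Sum>n\<in>S. c n * \<rho> n) 1"
proof -
  have "S' \<subseteq> S \<Longrightarrow> rad_expr S (\<lambda>\<rho> \<beta>. \<Sum>n\<in>S'. c n * \<rho> n) 1" for S'
  proof (induction S' rule: infinite_finite_induct)
    case (infinite A)
    then show ?case using assms(1) finite_subset by blast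
  next
    case empty
    then show ?case using rad_expr_zero by simp
  next
    case (insert n F)
    then have "rad_expr S (\<lambda>\<rho> \<beta>. c n * \<rho> n) 1"
      using assms(2) rad_expr_const[of "c n" S 0] rad_expr.var[of n S 1]
      by (intro rad_expr.mult[of S _ 0 _ 1]) auto
    then show ?case using insert by (auto intro: rad_expr.add)
  qed
  then show ?thesis by simp
qed

text \<open>The hypotheses on \<open>g\<close> say \<open>degree g < k\<close> (with truncated subtraction, so \<open>g = 0\<close>
  when \<open>k = 0\<close>); this is how the coefficient \<open>B\<close> in \<open>f = A + \<rho> m * B\<close> is bounded below.\<close>

lemma rad_expr_mult_pred:
  assumes "rad_expr T f j" "rad_expr T g (k - 1)" "k = 0 \<longrightarrow> g = (\<lambda>\<rho> \<beta>. 0)" "j + k \<le> l + 1"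
  shows "rad_expr T (\<lambda>\<rho> \<beta>. f \<rho> \<beta> * g \<rho> \<beta>) l"
proof (cases "k = 0")
  case True
  then show ?thesis using assms rad_expr_zero by simp
next
  case False
  then show ?thesis using assms by (intro rad_expr.mult[of T f j g "k - 1"]) auto
qed

lemma rad_expr_split_var:
  assumes "rad_expr (insert m T) f k" "m \<notin> T"
  shows "\<exists>A B. rad_expr T A k \<and> rad_expr T B (k - 1) \<and> (k = 0 \<longrightarrow> B = (\<lambda>\<rho> \<beta>. 0)) \<and>
           (\<forall>\<rho> \<beta>. rad_roots \<rho> \<beta> \<longrightarrow> f \<rho> \<beta> = A \<rho> \<beta> + \<rho> m * B \<rho> \<beta>)"
  using assms
proof (induction rule: rad_expr.induct)
  case (poly p k)
  then show ?case
    by (intro exI[of _ "\<lambda>\<rho> \<beta>. poly p \<beta>"] exI[of _ "\<lambda>\<rho> \<beta>. 0"]) (auto intro: rad_expr.poly rad_expr_zero)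
next
  case (var n k)
  show ?case
  proof (cases "n = m")
    case True
    then show ?thesis using var
      by (intro exI[of _ "\<lambda>\<rho> \<beta>. 0"] exI[of _ "\<lambda>\<rho> \<beta>. 1"]) (auto intro: rad_expr_zero rad_expr_const)
  next
    case False
    then show ?thesis using var
      by (intro exI[of _ "\<lambda>\<rho> \<beta>. \<rho> n"] exI[of _ "\<lambda>\<rho> \<beta>. 0"]) (auto intro: rad_expr.var rad_expr_zero)
  qed
next
  case (add f k g)
  then obtain A1 B1 A2 B2 where
    "rad_expr T A1 k" "rad_expr T B1 (k - 1)" "k = 0 \<longrightarrow> B1 = (\<lambda>\<rho> \<beta>. 0)"
    "\<forall>\<rho> \<beta>. rad_roots \<rho> \<beta> \<longrightarrow> f \<rho> \<beta> = A1 \<rho> \<beta> + \<rho> m * B1 \<rho> \<beta>"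
    "rad_expr T A2 k" "rad_expr T B2 (k - 1)" "k = 0 \<longrightarrow> B2 = (\<lambda>\<rho> \<beta>. 0)"
    "\<forall>\<rho> \<beta>. rad_roots \<rho> \<beta> \<longrightarrow> g \<rho> \<beta> = A2 \<rho> \<beta> + \<rho> m * B2 \<rho> \<beta>"
    by blast
  then show ?case
    by (intro exI[of _ "\<lambda>\<rho> \<beta>. A1 \<rho> \<beta> + A2 \<rho> \<beta>"] exI[of _ "\<lambda>\<rho> \<beta>. B1 \<rho> \<beta> + B2 \<rho> \<beta>"])
      (auto intro: rad_expr.add simp: algebra_simps)
next
  case (mult f k1 g k2 k)
  then obtain A1 B1 A2 B2 where 1:
    "rad_expr T A1 k1" "rad_expr T B1 (k1 - 1)" "k1 = 0 \<longrightarrow> B1 = (\<lambda>\<rho> \<beta>. 0)"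
    "\<forall>\<rho> \<beta>. rad_roots \<rho> \<beta> \<longrightarrow> f \<rho> \<beta> = A1 \<rho> \<beta> + \<rho> m * B1 \<rho> \<beta>"
    and 2: "rad_expr T A2 k2" "rad_expr T B2 (k2 - 1)" "k2 = 0 \<longrightarrow> B2 = (\<lambda>\<rho> \<beta>. 0)"
    "\<forall>\<rho> \<beta>. rad_roots \<rho> \<beta> \<longrightarrow> g \<rho> \<beta> = A2 \<rho> \<beta> + \<rho> m * B2 \<rho> \<beta>"
    by blast
  have "rad_expr T (\<lambda>\<rho> \<beta>. rad m \<beta> * B1 \<rho> \<beta>) (k1 + 1)"
    by (rule rad_expr_mult_pred[OF rad_expr_rad 1(2,3)]) simp
  then have "rad_expr T (\<lambda>\<rho> \<beta>. rad m \<beta> * B1 \<rho> \<beta> * B2 \<rho> \<beta>) k"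
    by (rule rad_expr_mult_pred[OF _ 2(2,3)]) (use mult in simp)
  moreover have "rad_expr T (\<lambda>\<rho> \<beta>. A1 \<rho> \<beta> * A2 \<rho> \<beta>) k"
    using 1(1) 2(1) mult by (intro rad_expr.mult[of T A1 k1 A2 k2]) auto
  moreover have "rad_expr T (\<lambda>\<rho> \<beta>. A1 \<rho> \<beta> * B2 \<rho> \<beta> + A2 \<rho> \<beta> * B1 \<rho> \<beta>) (k - 1)"
    by (intro rad_expr.add rad_expr_mult_pred[OF 1(1) 2(2,3)] rad_expr_mult_pred[OF 2(1) 1(2,3)])
      (use mult in simp_all)
  moreover have "f \<rho> \<beta> * g \<rho> \<beta> = (A1 \<rho> \<beta> * A2 \<rho> \<beta> + rad m \<beta> * B1 \<rho> \<beta> * B2 \<rho> \<beta>)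
      + \<rho> m * (A1 \<rho> \<beta> * B2 \<rho> \<beta> + A2 \<rho> \<beta> * B1 \<rho> \<beta>)" if "rad_roots \<rho> \<beta>" for \<rho> \<beta>
  proof -
    have "rad m \<beta> = \<rho> m * \<rho> m" using that unfolding rad_roots_def by (simp add: power2_eq_square)
    then show ?thesis using 1(4) 2(4) that by (simp add: algebra_simps)
  qed
  ultimately show ?case using 1(3) 2(3) mult(3)
    by (intro exI[of _ "\<lambda>\<rho> \<beta>. A1 \<rho> \<beta> * A2 \<rho> \<beta> + rad m \<beta> * B1 \<rho> \<beta> * B2 \<rho> \<beta>"]
        exI[of _ "\<lambda>\<rho> \<beta>. A1 \<rho> \<beta> * B2 \<rho> \<beta> + A2 \<rho> \<beta> * B1 \<rho> \<beta>"])
      (auto intro: rad_expr.add)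
qed

lemma rad_expr_empty_poly:
  "rad_expr {} f k \<Longrightarrow> \<exists>p. int_poly p \<and> 2 * degree p \<le> k \<and> (\<forall>\<rho> \<beta>. f \<rho> \<beta> = poly p \<beta>)"
proof (induction rule: rad_expr.induct)
  case (poly p k)
  then show ?case by auto
next
  case (var n k)
  then show ?case by auto
next
  case (add f k g)
  then obtain p q where "int_poly p" "2 * degree p \<le> k" "\<forall>\<rho> \<beta>. f \<rho> \<beta> = poly p \<beta>"
    "int_poly q" "2 * degree q \<le> k" "\<forall>\<rho> \<beta>. g \<rho> \<beta> = poly q \<beta>" by blast
  moreover have "degree (p + q) \<le> max (degree p) (degree q)" by (rule degree_add_le) auto
  ultimately show ?case by (intro exI[of _ "p + q"]) (auto simp: int_poly_add)
next
  case (mult f k1 g k2 k)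
  then obtain p q where "int_poly p" "2 * degree p \<le> k1" "\<forall>\<rho> \<beta>. f \<rho> \<beta> = poly p \<beta>"
    "int_poly q" "2 * degree q \<le> k2" "\<forall>\<rho> \<beta>. g \<rho> \<beta> = poly q \<beta>" by blast
  moreover have "degree (p * q) \<le> degree p + degree q" by (rule degree_mult_le)
  ultimately show ?case using mult(3) by (intro exI[of _ "p * q"]) (auto simp: int_poly_mult)
qed

text \<open>Multiplying \<open>f\<close> by its conjugate under \<open>\<rho> m \<mapsto> - \<rho> m\<close> gives \<open>A\<^sup>2 - rad m \<beta> * B\<^sup>2\<close>,
  which no longer involves \<open>\<rho> m\<close>.\<close>

lemma rad_expr_conj_mult:
  assumes "rad_expr (insert m T) f k" "m \<notin> T"
  shows "\<exists>h. rad_expr T h (2 * k) \<and>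
           (\<forall>\<rho> \<beta>. rad_roots \<rho> \<beta> \<longrightarrow> f \<rho> \<beta> * f (\<rho>(m := - \<rho> m)) \<beta> = h \<rho> \<beta>)"
proof -
  obtain A B where AB: "rad_expr T A k" "rad_expr T B (k - 1)" "k = 0 \<longrightarrow> B = (\<lambda>\<rho> \<beta>. 0)"
    "\<forall>\<rho> \<beta>. rad_roots \<rho> \<beta> \<longrightarrow> f \<rho> \<beta> = A \<rho> \<beta> + \<rho> m * B \<rho> \<beta>"
    using rad_expr_split_var[OF assms] by blast
  have "rad_expr T (\<lambda>\<rho> \<beta>. - rad m \<beta>) 2"
    using rad_expr.poly[OF int_poly_minus[OF int_poly_rad_poly], of m 2 T] degree_rad_poly[of m]
    by (simp add: poly_rad_poly)
  then have "rad_expr T (\<lambda>\<rho> \<beta>. - rad m \<beta> * B \<rho> \<beta>) (k + 1)"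
    by (rule rad_expr_mult_pred[OF _ AB(2,3)]) simp
  then have RB_sq: "rad_expr T (\<lambda>\<rho> \<beta>. - rad m \<beta> * B \<rho> \<beta> * B \<rho> \<beta>) (2 * k)"
    by (rule rad_expr_mult_pred[OF _ AB(2,3)]) simp
  have A_sq: "rad_expr T (\<lambda>\<rho> \<beta>. A \<rho> \<beta> * A \<rho> \<beta>) (2 * k)"
    using AB(1) by (intro rad_expr.mult[of T A k A k]) auto
  have norm_eq: "f \<rho> \<beta> * f (\<rho>(m := - \<rho> m)) \<beta> = A \<rho> \<beta> * A \<rho> \<beta> + - rad m \<beta> * B \<rho> \<beta> * B \<rho> \<beta>"
    if "rad_roots \<rho> \<beta>" for \<rho> \<beta>
  proof -
    have "\<forall>n\<in>T. \<rho> n = (\<rho>(m := - \<rho> m)) n" using assms(2) by auto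
    then have "A (\<rho>(m := - \<rho> m)) \<beta> = A \<rho> \<beta>" "B (\<rho>(m := - \<rho> m)) \<beta> = B \<rho> \<beta>"
      using rad_expr_cong[OF AB(1)] rad_expr_cong[OF AB(2)] by metis+
    then have f_flip: "f (\<rho>(m := - \<rho> m)) \<beta> = A \<rho> \<beta> - \<rho> m * B \<rho> \<beta>"
      using AB(4) rad_roots_flip[OF that] by simp
    have f_eq: "f \<rho> \<beta> = A \<rho> \<beta> + \<rho> m * B \<rho> \<beta>" using AB(4) that by simp
    have rad_eq: "rad m \<beta> = \<rho> m * \<rho> m" using that unfolding rad_roots_def by (simp add: power2_eq_square)
    show ?thesis unfolding f_flip f_eq rad_eq by (simp add: algebra_simps)
  qed
  show ?thesis using rad_expr.add[OF A_sq RB_sq] norm_eq by blast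
qed

fun flip_norm :: "nat list \<Rightarrow> ((nat \<Rightarrow> real) \<Rightarrow> real \<Rightarrow> real) \<Rightarrow> (nat \<Rightarrow> real) \<Rightarrow> real \<Rightarrow> real" where
  "flip_norm [] f = f"
| "flip_norm (m # ms) f = flip_norm ms (\<lambda>\<rho> \<beta>. f \<rho> \<beta> * f (\<rho>(m := - \<rho> m)) \<beta>)"

lemma flip_norm_cong:
  "(\<And>\<rho> \<beta>. rad_roots \<rho> \<beta> \<Longrightarrow> f \<rho> \<beta> = g \<rho> \<beta>) \<Longrightarrow> rad_roots \<rho> \<beta> \<Longrightarrow>
    flip_norm ms f \<rho> \<beta> = flip_norm ms g \<rho> \<beta>"
proof (induction ms arbitrary: f g)
  case Nil
  then show ?case by simp
next
  case (Cons m ms)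
  show ?case unfolding flip_norm.simps
  proof (rule Cons.IH)
    fix \<rho>' \<beta>' assume "rad_roots \<rho>' \<beta>'"
    then show "f \<rho>' \<beta>' * f (\<rho>'(m := - \<rho>' m)) \<beta>' = g \<rho>' \<beta>' * g (\<rho>'(m := - \<rho>' m)) \<beta>'"
      using Cons.prems(1) rad_roots_flip by metis
  qed (rule Cons.prems(2))
qed

lemma rad_expr_flip_norm_poly:
  "distinct ms \<Longrightarrow> rad_expr (set ms) f k \<Longrightarrow>
    \<exists>p. int_poly p \<and> 2 * degree p \<le> 2 ^ length ms * k \<and>
      (\<forall>\<rho> \<beta>. rad_roots \<rho> \<beta> \<longrightarrow> flip_norm ms f \<rho> \<beta> = poly p \<beta>)"
proof (induction ms arbitrary: f k)
  case Nil
  then obtain p where "int_poly p" "2 * degree p \<le> k" "\<forall>\<rho> \<beta>. f \<rho> \<beta> = poly p \<beta>"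
    using rad_expr_empty_poly[of f k] by auto
  then show ?case by auto
next
  case (Cons m ms)
  obtain h where h: "rad_expr (set ms) h (2 * k)"
      "\<forall>\<rho> \<beta>. rad_roots \<rho> \<beta> \<longrightarrow> f \<rho> \<beta> * f (\<rho>(m := - \<rho> m)) \<beta> = h \<rho> \<beta>"
    using rad_expr_conj_mult[of m "set ms" f k] Cons.prems by auto
  obtain p where "int_poly p" "2 * degree p \<le> 2 ^ length ms * (2 * k)"
      "\<forall>\<rho> \<beta>. rad_roots \<rho> \<beta> \<longrightarrow> flip_norm ms h \<rho> \<beta> = poly p \<beta>"
    using Cons.IH[OF _ h(1)] Cons.prems by auto
  moreover have "flip_norm (m # ms) f \<rho> \<beta> = flip_norm ms h \<rho> \<beta>" if "rad_roots \<rho> \<beta>" for \<rho> \<beta>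
    unfolding flip_norm.simps using h(2) that by (intro flip_norm_cong) auto
  ultimately show ?case by (intro exI[of _ p]) (auto simp: algebra_simps)
qed

lemma abs_flip_norm_le:
  assumes "0 \<le> K" "\<And>\<rho>'. (\<forall>n. \<bar>\<rho>' n\<bar> = \<bar>\<rho> n\<bar>) \<Longrightarrow> \<bar>f \<rho>' \<beta>\<bar> \<le> K"
  shows "\<bar>flip_norm ms f \<rho> \<beta>\<bar> \<le> \<bar>f \<rho> \<beta>\<bar> * K ^ (2 ^ length ms - 1)"
  using assms
proof (induction ms arbitrary: f K)
  case Nil
  then show ?case by simp
next
  case (Cons m ms)
  define f' where "f' = (\<lambda>\<rho> \<beta>. f \<rho> \<beta> * f (\<rho>(m := - \<rho> m)) \<beta>)"
  have flip_le: "\<bar>f (\<rho>'(m := - \<rho>' m)) \<beta>\<bar> \<le> K" if "\<forall>n. \<bar>\<rho>' n\<bar> = \<bar>\<rho> n\<bar>" for \<rho>'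
    using Cons.prems(2) that by auto
  have "\<bar>f' \<rho>' \<beta>\<bar> \<le> K\<^sup>2" if "\<forall>n. \<bar>\<rho>' n\<bar> = \<bar>\<rho> n\<bar>" for \<rho>'
    unfolding f'_def abs_mult power2_eq_square
    using Cons.prems that flip_le by (intro mult_mono) auto
  then have "\<bar>flip_norm ms f' \<rho> \<beta>\<bar> \<le> \<bar>f' \<rho> \<beta>\<bar> * (K\<^sup>2) ^ (2 ^ length ms - 1)"
    using Cons.IH[of "K\<^sup>2" f'] by simp
  also have "\<dots> = \<bar>f \<rho> \<beta>\<bar> * (\<bar>f (\<rho>(m := - \<rho> m)) \<beta>\<bar> * K ^ (2 * (2 ^ length ms - 1)))"
    unfolding f'_def abs_mult by (simp add: power_mult)
  also have "\<dots> \<le> \<bar>f \<rho> \<beta>\<bar> * (K * K ^ (2 * (2 ^ length ms - 1)))"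
    using flip_le[of \<rho>] Cons.prems(1) by (intro mult_left_mono mult_right_mono) auto
  also have "K * K ^ (2 * (2 ^ length ms - 1)) = K ^ (2 ^ length (m # ms) - 1)"
  proof -
    have "(1::nat) \<le> 2 ^ length ms" by simp
    then have "Suc (2 * (2 ^ length ms - 1)) = 2 ^ length (m # ms) - 1" by (simp, arith)
    then show ?thesis by (metis power_Suc)
  qed
  finally show ?case unfolding f'_def by simp
qed

text \<open>Unlike plain nonvanishing, this property survives products.\<close>

definition dense_nonzero :: "(real \<Rightarrow> real) \<Rightarrow> bool" where
  "dense_nonzero F \<longleftrightarrow> continuous_on {0<..<15} F \<and>
     (\<forall>a b. 0 \<le> a \<longrightarrow> a < b \<longrightarrow> b \<le> 15 \<longrightarrow> (\<exists>\<beta>\<in>{a<..<b}. F \<beta> \<noteq> 0))"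

definition signs_dense_nonzero :: "((nat \<Rightarrow> real) \<Rightarrow> real \<Rightarrow> real) \<Rightarrow> bool" where
  "signs_dense_nonzero f \<longleftrightarrow>
     (\<forall>\<sigma>. range \<sigma> \<subseteq> {-1, 1} \<longrightarrow> dense_nonzero (\<lambda>\<beta>. f (\<lambda>n. \<sigma> n * freq n \<beta>) \<beta>))"

lemma dense_nonzero_mult:
  assumes F: "dense_nonzero F" and G: "dense_nonzero G"
  shows "dense_nonzero (\<lambda>\<beta>. F \<beta> * G \<beta>)"
  unfolding dense_nonzero_def
proof (intro conjI allI impI)
  show "continuous_on {0<..<15} (\<lambda>\<beta>. F \<beta> * G \<beta>)"
    using F G unfolding dense_nonzero_def by (intro continuous_intros) auto
  fix a b :: real assume ab: "0 \<le> a" "a < b" "b \<le> 15"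
  obtain \<beta>0 where \<beta>0: "\<beta>0 \<in> {a<..<b}" "F \<beta>0 \<noteq> 0" using F ab unfolding dense_nonzero_def by blast
  then have "isCont F \<beta>0"
    using F ab unfolding dense_nonzero_def by (subst (asm) continuous_on_eq_continuous_at) auto
  then obtain d where d: "d > 0" "\<And>y. dist \<beta>0 y < d \<Longrightarrow> F y \<noteq> 0"
    using continuous_at_avoid[of \<beta>0 F 0] \<beta>0 by blast
  have "0 \<le> max a (\<beta>0 - d)" "max a (\<beta>0 - d) < min b (\<beta>0 + d)" "min b (\<beta>0 + d) \<le> 15"
    using ab \<beta>0 d by auto
  then obtain \<beta> where \<beta>: "\<beta> \<in> {max a (\<beta>0 - d)<..<min b (\<beta>0 + d)}" "G \<beta> \<noteq> 0"
    using G unfolding dense_nonzero_def by blast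
  then have "F \<beta> \<noteq> 0" using d by (auto simp: dist_real_def)
  then show "\<exists>\<beta>\<in>{a<..<b}. F \<beta> * G \<beta> \<noteq> 0" using \<beta> by auto
qed

lemma signs_dense_nonzero_flip_norm: "signs_dense_nonzero f \<Longrightarrow> signs_dense_nonzero (flip_norm ms f)"
proof (induction ms arbitrary: f)
  case Nil
  then show ?case by simp
next
  case (Cons m ms)
  have "signs_dense_nonzero (\<lambda>\<rho> \<beta>. f \<rho> \<beta> * f (\<rho>(m := - \<rho> m)) \<beta>)"
    unfolding signs_dense_nonzero_def
  proof (intro allI impI)
    fix \<sigma> :: "nat \<Rightarrow> real" assume \<sigma>: "range \<sigma> \<subseteq> {-1, 1}"
    then have "range (\<sigma>(m := - \<sigma> m)) \<subseteq> {-1, 1}" by auto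
    moreover have "(\<lambda>n. \<sigma> n * freq n \<beta>)(m := - (\<sigma> m * freq m \<beta>))
        = (\<lambda>n. (\<sigma>(m := - \<sigma> m)) n * freq n \<beta>)" for \<beta>
      by auto
    ultimately show "dense_nonzero (\<lambda>\<beta>. f (\<lambda>n. \<sigma> n * freq n \<beta>) \<beta> *
        f ((\<lambda>n. \<sigma> n * freq n \<beta>)(m := - (\<sigma> m * freq m \<beta>))) \<beta>)"
      using Cons.prems \<sigma> unfolding signs_dense_nonzero_def by (auto intro: dense_nonzero_mult)
  qed
  then show ?case using Cons.IH by simp
qed

lemma signs_dense_nonzero_linear:
  assumes "finite S" "0 \<notin> S" "\<forall>n\<in>S. c n \<in> \<int>" "\<exists>n\<in>S. c n \<noteq> 0"
  shows "signs_dense_nonzero (\<lambda>\<rho> \<beta>. \<Sum>n\<in>S. c n * \<rho> n)"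
  unfolding signs_dense_nonzero_def dense_nonzero_def
proof (intro allI impI conjI)
  fix \<sigma> :: "nat \<Rightarrow> real" assume \<sigma>: "range \<sigma> \<subseteq> {-1, 1}"
  show "continuous_on {0<..<15} (\<lambda>\<beta>. \<Sum>n\<in>S. c n * (\<sigma> n * freq n \<beta>))"
    by (intro continuous_intros)
  fix a b :: real assume ab: "0 \<le> a" "a < b" "b \<le> 15"
  have \<sigma>_cases: "\<sigma> n = -1 \<or> \<sigma> n = 1" for n using \<sigma> by auto
  then have ints: "\<forall>n\<in>S. c n * \<sigma> n \<in> \<int>" using assms(3) by (metis Ints_1 Ints_minus Ints_mult)
  have "\<sigma> n \<noteq> 0" for n using \<sigma>_cases[of n] by auto
  then have "\<not> (\<forall>n\<in>S. c n * \<sigma> n = 0)" using assms(4) by auto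
  then have "\<not> (\<forall>\<beta>\<in>{a<..<b}. (\<Sum>n\<in>S. c n * \<sigma> n * freq n \<beta>) = 0)"
    using freq_int_comb_eq_0_imp_coeffs_eq_0[OF assms(1,2) ints ab] by blast
  then show "\<exists>\<beta>\<in>{a<..<b}. (\<Sum>n\<in>S. c n * (\<sigma> n * freq n \<beta>)) \<noteq> 0"
    by (auto simp: mult.assoc)
qed

lemma freq_int_comb_norm_poly:
  assumes "finite S" "0 \<notin> S" "\<forall>n\<in>S. c n \<in> \<int>" "\<exists>n\<in>S. c n \<noteq> 0"
  obtains p where "int_poly p" "p \<noteq> 0" "2 * degree p \<le> 2 ^ card S"
    "\<And>\<beta>. 0 \<le> \<beta> \<Longrightarrow> \<beta> \<le> 15 \<Longrightarrow> \<bar>poly p \<beta>\<bar> \<le>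
       \<bar>\<Sum>n\<in>S. c n * freq n \<beta>\<bar> * (\<Sum>n\<in>S. \<bar>c n\<bar> * freq n \<beta>) ^ (2 ^ card S - 1)"
proof -
  define f where "f = (\<lambda>\<rho> (\<beta>::real). \<Sum>n\<in>S. c n * \<rho> n)"
  define ms where "ms = sorted_list_of_set S"
  have ms: "distinct ms" "set ms = S" "length ms = card S"
    unfolding ms_def using assms(1) by auto
  have "rad_expr (set ms) f 1"
    unfolding ms(2) f_def using assms(1,3) by (rule rad_expr_linear)
  then obtain p where p: "int_poly p" "2 * degree p \<le> 2 ^ card S"
      "\<And>\<rho> \<beta>. rad_roots \<rho> \<beta> \<Longrightarrow> flip_norm ms f \<rho> \<beta> = poly p \<beta>"
    using rad_expr_flip_norm_poly[OF ms(1)] ms(3) by fastforce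
  have "signs_dense_nonzero (flip_norm ms f)"
    unfolding f_def using assms by (intro signs_dense_nonzero_flip_norm signs_dense_nonzero_linear)
  then have "dense_nonzero (\<lambda>\<beta>. flip_norm ms f (\<lambda>n. 1 * freq n \<beta>) \<beta>)"
    unfolding signs_dense_nonzero_def by auto
  then have "\<forall>a b. 0 \<le> a \<longrightarrow> a < b \<longrightarrow> b \<le> 15 \<longrightarrow>
      (\<exists>\<beta>\<in>{a<..<b}. flip_norm ms f (\<lambda>n. freq n \<beta>) \<beta> \<noteq> 0)"
    unfolding dense_nonzero_def by simp
  from this[rule_format, of 0 15]
  obtain \<beta> where "\<beta> \<in> {0<..<15}" "flip_norm ms f (\<lambda>n. freq n \<beta>) \<beta> \<noteq> 0" by auto
  then have "p \<noteq> 0" using p(3) rad_roots_freq by fastforce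
  moreover have "\<bar>poly p \<beta>\<bar> \<le>
      \<bar>\<Sum>n\<in>S. c n * freq n \<beta>\<bar> * (\<Sum>n\<in>S. \<bar>c n\<bar> * freq n \<beta>) ^ (2 ^ card S - 1)"
    if \<beta>: "0 \<le> \<beta>" "\<beta> \<le> 15" for \<beta>
  proof -
    have "\<bar>f \<rho>' \<beta>\<bar> \<le> (\<Sum>n\<in>S. \<bar>c n\<bar> * freq n \<beta>)" if "\<forall>n. \<bar>\<rho>' n\<bar> = \<bar>freq n \<beta>\<bar>" for \<rho>'
    proof -
      have "\<bar>f \<rho>' \<beta>\<bar> \<le> (\<Sum>n\<in>S. \<bar>c n\<bar> * \<bar>\<rho>' n\<bar>)"
        unfolding f_def by (rule order.trans[OF sum_abs]) (simp add: abs_mult)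
      then show ?thesis using that freq_nonneg[OF \<beta>] by simp
    qed
    moreover have "0 \<le> (\<Sum>n\<in>S. \<bar>c n\<bar> * freq n \<beta>)" using freq_nonneg[OF \<beta>] by (simp add: sum_nonneg)
    ultimately have "\<bar>flip_norm ms f (\<lambda>n. freq n \<beta>) \<beta>\<bar>
        \<le> \<bar>f (\<lambda>n. freq n \<beta>) \<beta>\<bar> * (\<Sum>n\<in>S. \<bar>c n\<bar> * freq n \<beta>) ^ (2 ^ length ms - 1)"
      by (intro abs_flip_norm_le) auto
    then show ?thesis using p(3) rad_roots_freq[OF \<beta>] ms(3) by (simp add: f_def)
  qed
  ultimately show ?thesis using that p(1,2) by blast
qed

section \<open>Sublevel sets of integer polynomials\<close>

lemma cmod_poly_ge_far_from_roots:
  fixes q :: "complex poly"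
  assumes "q \<noteq> 0" "0 \<le> \<eta>" "\<And>z. poly q z = 0 \<Longrightarrow> \<eta> \<le> cmod (x - z)"
  shows "cmod (lead_coeff q) * \<eta> ^ degree q \<le> cmod (poly q x)"
  using assms
proof (induction "degree q" arbitrary: q)
  case 0
  then obtain c where "q = [:c:]" by (metis degree_eq_zeroE)
  then show ?case by simp
next
  case (Suc d)
  obtain z where z: "poly q z = 0"
    using fundamental_theorem_of_algebra_alt[of q] Suc.hyps(2) by fastforce
  then obtain q1 where q1: "q = [:- z, 1:] * q1" using poly_eq_0_iff_dvd by (metis dvdE)
  with Suc.prems(1) have "q1 \<noteq> 0" by auto
  have "degree q = degree [:- z, 1:] + degree q1"
    unfolding q1 by (rule degree_mult_eq) (simp_all add: \<open>q1 \<noteq> 0\<close>)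
  then have deg: "degree q = Suc (degree q1)" by simp
  have "lead_coeff q = lead_coeff [:- z, 1:] * lead_coeff q1" unfolding q1 by (rule lead_coeff_mult)
  then have lead: "lead_coeff q = lead_coeff q1" by simp
  have IH: "cmod (lead_coeff q1) * \<eta> ^ degree q1 \<le> cmod (poly q1 x)"
    using Suc.hyps(1)[of q1] Suc.hyps(2) Suc.prems(2,3) \<open>q1 \<noteq> 0\<close> deg unfolding q1 by auto
  have "cmod (lead_coeff q) * \<eta> ^ degree q = \<eta> * (cmod (lead_coeff q1) * \<eta> ^ degree q1)"
    unfolding lead unfolding deg by simp
  also have "\<dots> \<le> cmod (x - z) * cmod (poly q1 x)"
    using IH Suc.prems(2,3) z by (intro mult_mono) auto
  also have "\<dots> = cmod (poly q x)"
    unfolding q1 by (simp add: norm_mult flip: left_diff_distrib)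
  finally show ?case .
qed

lemma int_poly_sublevel_subset_near_roots:
  assumes "int_poly p" "0 < degree p" "0 < \<delta>"
  defines "\<eta> \<equiv> root (degree p) \<delta>"
  shows "{x. \<bar>poly p x\<bar> < \<delta>}
    \<subseteq> (\<Union>z\<in>{z. poly (map_poly complex_of_real p) z = 0}. {Re z - \<eta> <..< Re z + \<eta>})"
proof (rule subsetI, rule ccontr)
  define q where "q = map_poly complex_of_real p"
  have "p \<noteq> 0" using assms(2) by auto
  then have "q \<noteq> 0" "degree q = degree p" "lead_coeff q = complex_of_real (lead_coeff p)"
    unfolding q_def by (auto simp: degree_map_poly coeff_map_poly map_poly_eq_0_iff)
  have poly_q: "poly q (complex_of_real x) = complex_of_real (poly p x)" for x
    unfolding q_def by (induction p) (auto simp: map_poly_pCons)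
  have lead: "1 \<le> \<bar>lead_coeff p\<bar>"
    using assms(1) \<open>p \<noteq> 0\<close> unfolding int_poly_def by (intro Ints_nonzero_abs_ge1) auto
  have "0 \<le> \<eta>" "\<eta> ^ degree p = \<delta>" unfolding \<eta>_def using assms(2,3) by auto
  fix x assume x: "x \<in> {x. \<bar>poly p x\<bar> < \<delta>}"
    "x \<notin> (\<Union>z\<in>{z. poly (map_poly complex_of_real p) z = 0}. {Re z - \<eta> <..< Re z + \<eta>})"
  have "\<eta> \<le> cmod (complex_of_real x - z)" if "poly q z = 0" for z
  proof -
    have "\<not> (Re z - \<eta> < x \<and> x < Re z + \<eta>)" using x(2) that unfolding q_def by auto
    then have "\<eta> \<le> \<bar>x - Re z\<bar>" by arith
    also have "\<dots> \<le> cmod (complex_of_real x - z)" using abs_Re_le_cmod[of "complex_of_real x - z"] by simp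
    finally show ?thesis .
  qed
  then have "cmod (lead_coeff q) * \<eta> ^ degree q \<le> cmod (poly q (complex_of_real x))"
    using \<open>q \<noteq> 0\<close> \<open>0 \<le> \<eta>\<close> by (intro cmod_poly_ge_far_from_roots)
  then have "\<bar>lead_coeff p\<bar> * \<delta> \<le> \<bar>poly p x\<bar>"
    using \<open>degree q = degree p\<close> \<open>\<eta> ^ degree p = \<delta>\<close> \<open>lead_coeff q = _\<close> poly_q by simp
  moreover have "\<delta> \<le> \<bar>lead_coeff p\<bar> * \<delta>" using lead assms(3) by simp
  ultimately show False using x(1) by simp
qed

lemma emeasure_int_poly_sublevel_le:
  assumes "int_poly p" "p \<noteq> 0" "degree p \<le> D" "1 \<le> D" "0 < \<delta>" "\<delta> \<le> 1"
  shows "emeasure lborel {x. \<bar>poly p x\<bar> < \<delta>} \<le> ennreal (2 * real D * root D \<delta>)"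
proof (cases "degree p = 0")
  case True
  then obtain c where "p = [:c:]" by (metis degree_eq_zeroE)
  moreover have "1 \<le> \<bar>lead_coeff p\<bar>"
    using assms(1,2) unfolding int_poly_def by (intro Ints_nonzero_abs_ge1) auto
  ultimately have "{x. \<bar>poly p x\<bar> < \<delta>} = {}" using assms(6) by auto
  then show ?thesis by simp
next
  case False
  define \<eta> where "\<eta> = root (degree p) \<delta>"
  define Z where "Z = {z. poly (map_poly complex_of_real p) z = 0}"
  have "0 \<le> \<eta>" unfolding \<eta>_def using assms(5) by (simp add: real_root_ge_zero)
  have "map_poly complex_of_real p \<noteq> 0" using assms(2) by (simp add: map_poly_eq_0_iff)
  then have "finite Z" "card Z \<le> degree p"
    unfolding Z_def using poly_roots_finite card_poly_roots_bound[of "map_poly complex_of_real p"]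
    by (auto simp: degree_map_poly)
  have "emeasure lborel {x. \<bar>poly p x\<bar> < \<delta>} \<le> emeasure lborel (\<Union>z\<in>Z. {Re z - \<eta> <..< Re z + \<eta>})"
    using int_poly_sublevel_subset_near_roots[OF assms(1) _ assms(5)] False unfolding Z_def \<eta>_def
    by (intro emeasure_mono) (auto intro!: borel_open open_UN)
  also have "\<dots> \<le> (\<Sum>z\<in>Z. emeasure lborel {Re z - \<eta> <..< Re z + \<eta>})"
    using \<open>finite Z\<close> by (intro emeasure_subadditive_finite) auto
  also have "\<dots> = ennreal (real (card Z) * (2 * \<eta>))"
    using \<open>0 \<le> \<eta>\<close> by (simp add: emeasure_lborel_Ioo ennreal_mult ennreal_of_nat_eq_real_of_nat)
  also have "\<dots> \<le> ennreal (2 * real D * root D \<delta>)"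
  proof (rule ennreal_leI)
    have "real (card Z) * (2 * \<eta>) \<le> real D * (2 * \<eta>)"
      using \<open>card Z \<le> degree p\<close> assms(3) \<open>0 \<le> \<eta>\<close> by (intro mult_right_mono) auto
    also have "\<dots> \<le> real D * (2 * root D \<delta>)"
      unfolding \<eta>_def using False assms(3,5,6) by (intro mult_left_mono real_root_increasing) auto
    finally show "real (card Z) * (2 * \<eta>) \<le> 2 * real D * root D \<delta>" by simp
  qed
  finally show ?thesis .
qed

lemma sets_interval_sublevel:
  fixes f :: "real \<Rightarrow> real"
  assumes "continuous_on UNIV f"
  shows "{x\<in>{a..b}. \<bar>f x\<bar> < e} \<in> sets lborel"
proof -
  have "open {x. \<bar>f x\<bar> < e}" using assms by (intro open_Collect_less continuous_intros)
  then have "{a..b} \<inter> {x. \<bar>f x\<bar> < e} \<in> sets lborel" by auto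
  moreover have "{x\<in>{a..b}. \<bar>f x\<bar> < e} = {a..b} \<inter> {x. \<bar>f x\<bar> < e}" by auto
  ultimately show ?thesis by (simp only:)
qed

lemma emeasure_int_poly_sublevel_interval_le:
  assumes "int_poly p" "p \<noteq> 0" "degree p \<le> D" "1 \<le> D" "0 < \<delta>" "a \<le> b"
  shows "emeasure lborel {x\<in>{a..b}. \<bar>poly p x\<bar> < \<delta>} \<le> ennreal ((2 * real D + (b - a)) * root D \<delta>)"
proof (cases "\<delta> \<le> 1")
  case True
  have "open {x. \<bar>poly p x\<bar> < \<delta>}" by (intro open_Collect_less continuous_intros)
  then have "emeasure lborel {x\<in>{a..b}. \<bar>poly p x\<bar> < \<delta>} \<le> emeasure lborel {x. \<bar>poly p x\<bar> < \<delta>}"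
    by (intro emeasure_mono) auto
  also have "\<dots> \<le> ennreal (2 * real D * root D \<delta>)"
    using assms True by (intro emeasure_int_poly_sublevel_le)
  also have "\<dots> \<le> ennreal ((2 * real D + (b - a)) * root D \<delta>)"
    using assms by (intro ennreal_leI mult_right_mono) auto
  finally show ?thesis .
next
  case False
  have "emeasure lborel {x\<in>{a..b}. \<bar>poly p x\<bar> < \<delta>} \<le> emeasure lborel {a..b}"
    by (intro emeasure_mono) auto
  also have "\<dots> = ennreal ((b - a) * 1)" using assms by simp
  also have "\<dots> \<le> ennreal ((2 * real D + (b - a)) * root D \<delta>)"
    using assms False by (intro ennreal_leI mult_mono) auto
  finally show ?thesis .
qed

section \<open>Small values of integer forms in the frequencies\<close>

text \<open>Entries \<open>0\<close> contribute nothing to \<open>signed_form\<close>; they pad every form with at most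
  \<open>M\<close> terms to a list of length exactly \<open>M\<close>.\<close>

definition signed_form :: "int list \<Rightarrow> (nat \<Rightarrow> real) \<Rightarrow> real" where
  "signed_form L \<rho> = (\<Sum>x\<leftarrow>L. of_int (sgn x) * \<rho> (nat \<bar>x\<bar>))"

definition signed_coeff :: "int list \<Rightarrow> nat \<Rightarrow> real" where
  "signed_coeff L n = signed_form L (\<lambda>k. if k = n then 1 else 0)"

lemma signed_form_Nil [simp]: "signed_form [] \<rho> = 0"
  and signed_form_Cons [simp]: "signed_form (x # L) \<rho> = of_int (sgn x) * \<rho> (nat \<bar>x\<bar>) + signed_form L \<rho>"
  and signed_form_append [simp]: "signed_form (L1 @ L2) \<rho> = signed_form L1 \<rho> + signed_form L2 \<rho>"
  unfolding signed_form_def by simp_all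

lemma signed_form_replicate [simp]:
  "signed_form (replicate k x) \<rho> = real k * (of_int (sgn x) * \<rho> (nat \<bar>x\<bar>))"
  by (induction k) (auto simp: algebra_simps)

lemma signed_form_concat: "signed_form (concat Ls) \<rho> = (\<Sum>L\<leftarrow>Ls. signed_form L \<rho>)"
  by (induction Ls) auto

lemma signed_coeff_Cons:
  "signed_coeff (x # L) n = of_int (sgn x) * (if nat \<bar>x\<bar> = n then 1 else 0) + signed_coeff L n"
  unfolding signed_coeff_def by simp

lemma signed_coeff_Int: "signed_coeff L n \<in> \<int>"
  by (induction L) (auto simp: signed_coeff_Cons signed_coeff_def)

lemma signed_form_eq_sum:
  assumes "set L \<subseteq> {- int N..int N}"
  shows "signed_form L \<rho> = (\<Sum>n\<in>{1..N}. signed_coeff L n * \<rho> n)"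
  using assms
proof (induction L)
  case Nil
  then show ?case by (simp add: signed_coeff_def)
next
  case (Cons x L)
  have "(\<Sum>n\<in>{1..N}. of_int (sgn x) * (if nat \<bar>x\<bar> = n then 1 else 0) * \<rho> n)
      = (\<Sum>n\<in>{1..N}. if n = nat \<bar>x\<bar> then of_int (sgn x) * \<rho> n else 0)"
    by (intro sum.cong) auto
  also have "\<dots> = of_int (sgn x) * \<rho> (nat \<bar>x\<bar>)"
    using Cons.prems by (cases "x = 0") auto
  finally show ?case using Cons by (simp add: signed_coeff_Cons distrib_right sum.distrib)
qed

lemma sum_abs_signed_coeff_le: "(\<Sum>n\<in>{1..N}. \<bar>signed_coeff L n\<bar>) \<le> real (length L)"
proof (induction L)
  case Nil
  then show ?case by (simp add: signed_coeff_def)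
next
  case (Cons x L)
  have "(\<Sum>n\<in>{1..N}. \<bar>of_int (sgn x) * (if nat \<bar>x\<bar> = n then 1 else 0 :: real)\<bar>)
      = (\<Sum>n\<in>{1..N}. if n = nat \<bar>x\<bar> then \<bar>of_int (sgn x)\<bar> else 0)"
    by (intro sum.cong) auto
  also have "\<dots> \<le> 1" by (simp add: sgn_if)
  finally have "(\<Sum>n\<in>{1..N}. \<bar>of_int (sgn x) * (if nat \<bar>x\<bar> = n then 1 else 0 :: real)\<bar>) \<le> 1" .
  moreover have "(\<Sum>n\<in>{1..N}. \<bar>signed_coeff (x # L) n\<bar>)
      \<le> (\<Sum>n\<in>{1..N}. \<bar>of_int (sgn x) * (if nat \<bar>x\<bar> = n then 1 else 0 :: real)\<bar>)
        + (\<Sum>n\<in>{1..N}. \<bar>signed_coeff L n\<bar>)"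
    unfolding signed_coeff_Cons sum.distrib[symmetric] by (intro sum_mono abs_triangle_ineq)
  ultimately show ?case using Cons.IH by simp
qed

lemma card_signed_coeff_nonzero_le: "card {n\<in>{1..N}. signed_coeff L n \<noteq> 0} \<le> length L"
proof -
  have "real (card {n\<in>{1..N}. signed_coeff L n \<noteq> 0}) = (\<Sum>n | n \<in> {1..N} \<and> signed_coeff L n \<noteq> 0. 1)"
    by simp
  also have "\<dots> \<le> (\<Sum>n | n \<in> {1..N} \<and> signed_coeff L n \<noteq> 0. \<bar>signed_coeff L n\<bar>)"
    using signed_coeff_Int by (intro sum_mono Ints_nonzero_abs_ge1) auto
  also have "\<dots> \<le> (\<Sum>n\<in>{1..N}. \<bar>signed_coeff L n\<bar>)"
    by (intro sum_mono2) auto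
  also have "\<dots> \<le> real (length L)" by (rule sum_abs_signed_coeff_le)
  finally show ?thesis by simp
qed

definition nontrivial_forms :: "nat \<Rightarrow> nat \<Rightarrow> int list set" where
  "nontrivial_forms M N =
     {L. length L = M \<and> set L \<subseteq> {- int N..int N} \<and> (\<exists>n\<in>{1..N}. signed_coeff L n \<noteq> 0)}"

lemma finite_nontrivial_forms: "finite (nontrivial_forms M N)"
  unfolding nontrivial_forms_def
  by (rule finite_subset[of _ "{L. set L \<subseteq> {- int N..int N} \<and> length L = M}"])
    (auto intro: finite_lists_length_eq)

lemma card_nontrivial_forms_le: "card (nontrivial_forms M N) \<le> (2 * N + 1) ^ M"
proof -
  have "card (nontrivial_forms M N) \<le> card {L. set L \<subseteq> {- int N..int N} \<and> length L = M}"
    unfolding nontrivial_forms_def by (intro card_mono finite_lists_length_eq) auto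
  moreover have "card {- int N..int N} = 2 * N + 1" by simp
  ultimately show ?thesis by (simp only: card_lists_length_eq[OF finite_atLeastAtMost_int])
qed

lemma nontrivial_forms_pos: "L \<in> nontrivial_forms M N \<Longrightarrow> 0 < N \<and> 0 < M"
  using card_signed_coeff_nonzero_le[of N L] unfolding nontrivial_forms_def
  by (auto simp: card_gt_0_iff)

lemma signed_form_freq_norm_poly:
  assumes L: "L \<in> nontrivial_forms M N"
  obtains p where "int_poly p" "p \<noteq> 0" "degree p \<le> 2 ^ M"
    "\<And>\<beta>. 0 \<le> \<beta> \<Longrightarrow> \<beta> \<le> 15 \<Longrightarrow>
       \<bar>poly p \<beta>\<bar> \<le> \<bar>signed_form L (\<lambda>n. freq n \<beta>)\<bar> * (5 * real M * real N ^ 2) ^ 2 ^ M"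
proof -
  define S where "S = {n\<in>{1..N}. signed_coeff L n \<noteq> 0}"
  define K where "K = 5 * real M * real N ^ 2"
  have L_props: "length L = M" "set L \<subseteq> {- int N..int N}" "\<exists>n\<in>S. signed_coeff L n \<noteq> 0"
    using L unfolding nontrivial_forms_def S_def by auto
  have "1 * 1 \<le> real M * real N ^ 2"
    using nontrivial_forms_pos[OF L] by (intro mult_mono) (auto simp: one_le_power)
  then have "1 \<le> K" unfolding K_def by simp
  have "card S \<le> length L" unfolding S_def by (rule card_signed_coeff_nonzero_le)
  then have card_le: "2 ^ card S \<le> (2::nat) ^ M" using L_props(1) by (simp add: power_increasing)
  have form_eq: "signed_form L \<rho> = (\<Sum>n\<in>S. signed_coeff L n * \<rho> n)" for \<rho>
    unfolding signed_form_eq_sum[OF L_props(2)] S_def by (intro sum.mono_neutral_right) auto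
  obtain p where p: "int_poly p" "p \<noteq> 0" "2 * degree p \<le> 2 ^ card S"
    "\<And>\<beta>. 0 \<le> \<beta> \<Longrightarrow> \<beta> \<le> 15 \<Longrightarrow> \<bar>poly p \<beta>\<bar> \<le> \<bar>\<Sum>n\<in>S. signed_coeff L n * freq n \<beta>\<bar> *
        (\<Sum>n\<in>S. \<bar>signed_coeff L n\<bar> * freq n \<beta>) ^ (2 ^ card S - 1)"
    by (rule freq_int_comb_norm_poly[of S "signed_coeff L"])
      (use L_props in \<open>auto simp: S_def signed_coeff_Int\<close>)
  show ?thesis
  proof (rule that[OF p(1,2)])
    show "degree p \<le> 2 ^ M" using p(3) card_le by linarith
    fix \<beta> :: real assume \<beta>: "0 \<le> \<beta>" "\<beta> \<le> 15"
    have "freq n \<beta> \<le> 5 * real N ^ 2" if "n \<in> S" for n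
    proof -
      have "freq n \<beta> \<le> 5 * real n ^ 2" using \<beta> by (rule freq_le)
      also have "\<dots> \<le> 5 * real N ^ 2" using that unfolding S_def by (simp add: power_mono)
      finally show ?thesis .
    qed
    then have "(\<Sum>n\<in>S. \<bar>signed_coeff L n\<bar> * freq n \<beta>) \<le> (\<Sum>n\<in>S. \<bar>signed_coeff L n\<bar>) * (5 * real N ^ 2)"
      unfolding sum_distrib_right by (intro sum_mono mult_left_mono) auto
    also have "\<dots> \<le> K"
    proof -
      have "(\<Sum>n\<in>S. \<bar>signed_coeff L n\<bar>) \<le> (\<Sum>n\<in>{1..N}. \<bar>signed_coeff L n\<bar>)"
        unfolding S_def by (intro sum_mono2) auto
      also have "\<dots> \<le> real M" using sum_abs_signed_coeff_le[of L N] L_props(1) by simp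
      finally show ?thesis unfolding K_def by (simp add: mult_right_mono)
    qed
    finally have "(\<Sum>n\<in>S. \<bar>signed_coeff L n\<bar> * freq n \<beta>) ^ (2 ^ card S - 1) \<le> K ^ 2 ^ M"
      using \<open>1 \<le> K\<close> freq_nonneg[OF \<beta>] order.trans[OF diff_le_self card_le]
      by (intro order.trans[OF power_mono power_increasing]) (auto intro: sum_nonneg)
    then have "\<bar>poly p \<beta>\<bar> \<le> \<bar>signed_form L (\<lambda>n. freq n \<beta>)\<bar> * K ^ 2 ^ M"
      using p(4)[OF \<beta>] unfolding form_eq by (meson abs_ge_zero mult_left_mono order.trans)
    then show "\<bar>poly p \<beta>\<bar> \<le> \<bar>signed_form L (\<lambda>n. freq n \<beta>)\<bar> * (5 * real M * real N ^ 2) ^ 2 ^ M"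
      unfolding K_def .
  qed
qed

lemma emeasure_small_signed_form_le:
  assumes L: "L \<in> nontrivial_forms M N" and \<beta>: "0 \<le> \<beta>1" "\<beta>1 \<le> \<beta>2" "\<beta>2 \<le> 15" and "0 < \<epsilon>"
  shows "emeasure lborel {\<beta>\<in>{\<beta>1..\<beta>2}. \<bar>signed_form L (\<lambda>n. freq n \<beta>)\<bar> < \<epsilon>}
    \<le> ennreal ((2 * 2 ^ M + 15) * (5 * real M * real N ^ 2) * root (2 ^ M) \<epsilon>)"
proof -
  define K where "K = 5 * real M * real N ^ 2"
  define E :: nat where "E = 2 ^ M"
  have "1 * 1 \<le> real M * real N ^ 2"
    using nontrivial_forms_pos[OF L] by (intro mult_mono) (auto simp: one_le_power)
  then have "1 \<le> K" "1 \<le> E" unfolding K_def E_def by simp_all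
  obtain p where p: "int_poly p" "p \<noteq> 0" "degree p \<le> E"
    "\<And>\<beta>. 0 \<le> \<beta> \<Longrightarrow> \<beta> \<le> 15 \<Longrightarrow> \<bar>poly p \<beta>\<bar> \<le> \<bar>signed_form L (\<lambda>n. freq n \<beta>)\<bar> * K ^ E"
    using signed_form_freq_norm_poly[OF L] unfolding K_def E_def by blast
  have "\<bar>poly p \<beta>\<bar> < \<epsilon> * K ^ E"
    if "\<beta> \<in> {\<beta>1..\<beta>2}" "\<bar>signed_form L (\<lambda>n. freq n \<beta>)\<bar> < \<epsilon>" for \<beta>
  proof -
    have "\<bar>poly p \<beta>\<bar> \<le> \<bar>signed_form L (\<lambda>n. freq n \<beta>)\<bar> * K ^ E" using p(4) that(1) \<beta> by simp
    also have "\<dots> < \<epsilon> * K ^ E" using that(2) \<open>1 \<le> K\<close> by (intro mult_strict_right_mono) auto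
    finally show ?thesis .
  qed
  then have "emeasure lborel {\<beta>\<in>{\<beta>1..\<beta>2}. \<bar>signed_form L (\<lambda>n. freq n \<beta>)\<bar> < \<epsilon>}
      \<le> emeasure lborel {\<beta>\<in>{\<beta>1..\<beta>2}. \<bar>poly p \<beta>\<bar> < \<epsilon> * K ^ E}"
    by (intro emeasure_mono sets_interval_sublevel continuous_intros) auto
  also have "\<dots> \<le> ennreal ((2 * real E + (\<beta>2 - \<beta>1)) * root E (\<epsilon> * K ^ E))"
    using p(1-3) \<open>1 \<le> E\<close> \<open>1 \<le> K\<close> \<open>0 < \<epsilon>\<close> \<beta>
    by (intro emeasure_int_poly_sublevel_interval_le) auto
  also have "root E (\<epsilon> * K ^ E) = K * root E \<epsilon>"
    using \<open>1 \<le> E\<close> \<open>1 \<le> K\<close> by (simp add: real_root_mult real_root_power_cancel mult.commute)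
  also have "ennreal ((2 * real E + (\<beta>2 - \<beta>1)) * (K * root E \<epsilon>))
      \<le> ennreal ((2 * 2 ^ M + 15) * K * root (2 ^ M) \<epsilon>)"
    using \<beta> \<open>1 \<le> K\<close> \<open>0 < \<epsilon>\<close> unfolding E_def
    by (intro ennreal_leI) (simp add: mult.assoc mult_right_mono)
  finally show ?thesis unfolding K_def .
qed

lemma continuous_on_signed_form_freq [continuous_intros]:
  "continuous_on A (\<lambda>\<beta>. signed_form L (\<lambda>n. freq n \<beta>))"
  by (induction L) (auto intro!: continuous_intros)

text \<open>Why the exponent \<open>M + 4\<close>: by the sublevel estimate each form contributes measure
  \<open>O(N^2 / (N^(M+4) (k+1)))\<close>, and there are \<open>O(N^M)\<close> forms with entries in \<open>[-N, N]\<close>,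
  which leaves the summable factor \<open>1 / N^2\<close>.\<close>

definition resonant_set :: "nat \<Rightarrow> real \<Rightarrow> real \<Rightarrow> nat \<Rightarrow> real set" where
  "resonant_set M \<beta>1 \<beta>2 k = (\<Union>N. \<Union>L\<in>nontrivial_forms M N. {\<beta>\<in>{\<beta>1..\<beta>2}.
     \<bar>signed_form L (\<lambda>n. freq n \<beta>)\<bar> < (1 / (real N ^ (M + 4) * real (Suc k))) ^ 2 ^ M})"

lemma sets_resonant_slice:
  "{\<beta>\<in>{\<beta>1..\<beta>2}. \<bar>signed_form L (\<lambda>n. freq n \<beta>)\<bar> < e} \<in> sets lborel"
  by (intro sets_interval_sublevel continuous_intros)

lemma sets_resonant_set: "resonant_set M \<beta>1 \<beta>2 k \<in> sets lborel"
proof -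
  have "(\<Union>L\<in>nontrivial_forms M N. {\<beta>\<in>{\<beta>1..\<beta>2}. \<bar>signed_form L (\<lambda>n. freq n \<beta>)\<bar> < e}) \<in> sets lborel"
    for N e
    using finite_nontrivial_forms by (intro sets.finite_UN sets_resonant_slice)
  then show ?thesis unfolding resonant_set_def by (intro sets.countable_UN) auto
qed

lemma emeasure_resonant_level_le:
  assumes "0 \<le> \<beta>1" "\<beta>1 \<le> \<beta>2" "\<beta>2 \<le> 15"
  shows "emeasure lborel (\<Union>L\<in>nontrivial_forms M N. {\<beta>\<in>{\<beta>1..\<beta>2}.
      \<bar>signed_form L (\<lambda>n. freq n \<beta>)\<bar> < (1 / (real N ^ (M + 4) * real (Suc k))) ^ 2 ^ M})
    \<le> ennreal (3 ^ M * (2 * 2 ^ M + 15) * (5 * real M) / real (Suc k) / real N ^ 2)"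
    (is "emeasure lborel (\<Union>L\<in>_. ?slice L) \<le> _")
proof (cases "N = 0")
  case True
  then show ?thesis by (simp add: nontrivial_forms_def)
next
  case False
  define x where "x = real N"
  have "1 \<le> x" using False unfolding x_def by simp
  define b where "b = (2 * 2 ^ M + 15) * (5 * real M * x ^ 2) / (x ^ (M + 4) * real (Suc k))"
  have "0 \<le> b" unfolding b_def using \<open>1 \<le> x\<close> by (intro divide_nonneg_nonneg mult_nonneg_nonneg) auto
  have "emeasure lborel (\<Union>L\<in>nontrivial_forms M N. ?slice L)
      \<le> (\<Sum>L\<in>nontrivial_forms M N. emeasure lborel (?slice L))"
    using finite_nontrivial_forms sets_resonant_slice by (intro emeasure_subadditive_finite) auto
  also have "\<dots> \<le> (\<Sum>L\<in>nontrivial_forms M N. ennreal b)"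
  proof (intro sum_mono)
    fix L assume "L \<in> nontrivial_forms M N"
    then have "emeasure lborel (?slice L) \<le> ennreal ((2 * 2 ^ M + 15) * (5 * real M * x ^ 2) *
        root (2 ^ M) ((1 / (x ^ (M + 4) * real (Suc k))) ^ 2 ^ M))"
      unfolding x_def using assms False by (intro emeasure_small_signed_form_le) auto
    also have "root (2 ^ M) ((1 / (x ^ (M + 4) * real (Suc k))) ^ 2 ^ M) = 1 / (x ^ (M + 4) * real (Suc k))"
      using \<open>1 \<le> x\<close> by (intro real_root_power_cancel) auto
    finally show "emeasure lborel (?slice L) \<le> ennreal b" unfolding b_def by simp
  qed
  also have "\<dots> = ennreal (real (card (nontrivial_forms M N)) * b)"
    using \<open>0 \<le> b\<close> by (simp add: ennreal_mult ennreal_of_nat_eq_real_of_nat)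
  also have "\<dots> \<le> ennreal ((3 * x) ^ M * b)"
  proof (intro ennreal_leI mult_right_mono[OF _ \<open>0 \<le> b\<close>])
    have "real (card (nontrivial_forms M N)) \<le> real (2 * N + 1) ^ M"
      using card_nontrivial_forms_le by (metis of_nat_le_iff of_nat_power)
    also have "\<dots> \<le> (3 * x) ^ M" using \<open>1 \<le> x\<close> unfolding x_def by (intro power_mono) auto
    finally show "real (card (nontrivial_forms M N)) \<le> (3 * x) ^ M" .
  qed
  also have "(3 * x) ^ M * b = 3 ^ M * (2 * 2 ^ M + 15) * (5 * real M) / real (Suc k) / x ^ 2"
  proof -
    have "x ^ (M + 4) = x ^ M * (x ^ 2 * x ^ 2)" by (simp only: power_add[symmetric]) simp
    moreover have "x ^ M \<noteq> 0" "x \<noteq> 0" using \<open>1 \<le> x\<close> by auto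
    ultimately show ?thesis unfolding b_def power_mult_distrib by (simp add: divide_simps)
  qed
  finally show ?thesis unfolding x_def .
qed

lemma emeasure_resonant_set_le:
  assumes "0 \<le> \<beta>1" "\<beta>1 \<le> \<beta>2" "\<beta>2 \<le> 15"
  obtains C where "\<And>k. emeasure lborel (resonant_set M \<beta>1 \<beta>2 k) \<le> ennreal (C / real (Suc k))"
proof
  define C0 where "C0 = 3 ^ M * (2 * 2 ^ M + 15) * (5 * real M)"
  have summable: "summable (\<lambda>N. 1 / real N ^ 2)"
    using inverse_power_summable[of 2, where 'a = real] by (simp add: divide_inverse)
  fix k
  define c where "c = C0 / real (Suc k)"
  have "0 \<le> c" unfolding c_def C0_def by simp
  define level where "level N = (\<Union>L\<in>nontrivial_forms M N. {\<beta>\<in>{\<beta>1..\<beta>2}.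
      \<bar>signed_form L (\<lambda>n. freq n \<beta>)\<bar> < (1 / (real N ^ (M + 4) * real (Suc k))) ^ 2 ^ M})" for N
  have "level N \<in> sets lborel" for N
    unfolding level_def using finite_nontrivial_forms by (intro sets.finite_UN sets_resonant_slice)
  then have "emeasure lborel (resonant_set M \<beta>1 \<beta>2 k) \<le> (\<Sum>N. emeasure lborel (level N))"
    unfolding resonant_set_def level_def[symmetric] by (intro emeasure_subadditive_countably) auto
  also have "\<dots> \<le> (\<Sum>N. ennreal (c / real N ^ 2))"
    unfolding level_def c_def C0_def using emeasure_resonant_level_le[OF assms] by (intro suminf_le) auto
  also have "\<dots> = ennreal (\<Sum>N. c / real N ^ 2)"
    using summable_mult[OF summable, of c] \<open>0 \<le> c\<close> by (intro suminf_ennreal2) auto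
  also have "(\<Sum>N. c / real N ^ 2) = C0 * (\<Sum>N. 1 / real N ^ 2) / real (Suc k)"
    using suminf_mult[OF summable, of c] unfolding c_def by simp
  finally show "emeasure lborel (resonant_set M \<beta>1 \<beta>2 k)
      \<le> ennreal (C0 * (\<Sum>N. 1 / real N ^ 2) / real (Suc k))" .
qed

lemma null_sets_INT_if_emeasure_le:
  assumes "\<And>k. A k \<in> sets M" "\<And>k. emeasure M (A k) \<le> ennreal (C / real (Suc k))"
  shows "(\<Inter>k. A k) \<in> null_sets M"
proof (rule null_setsI)
  show "(\<Inter>k. A k) \<in> sets M" using assms(1) by auto
  show "emeasure M (\<Inter>k. A k) = 0"
  proof (rule antisym[OF ennreal_le_epsilon], simp_all)
    fix e :: real assume "0 < e"
    have "(\<lambda>k. C / real (Suc k)) \<longlonglongrightarrow> 0"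
      using LIMSEQ_Suc[OF lim_const_over_n[of C]] by simp
    then obtain k where "C / real (Suc k) < e"
      using \<open>0 < e\<close> by (metis lessI order_tendstoD(2) eventually_sequentially order.refl)
    have "emeasure M (\<Inter>k. A k) \<le> emeasure M (A k)" using assms(1) by (intro emeasure_mono) auto
    also have "\<dots> \<le> ennreal e" using assms(2)[of k] \<open>C / real (Suc k) < e\<close>
      by (meson ennreal_leI less_imp_le order.trans)
    finally show "emeasure M (\<Inter>k. A k) \<le> ennreal e" .
  qed
qed

section \<open>Multi-indices\<close>

lemma finite_supp_mi: "multi_index a \<Longrightarrow> finite (supp_mi a)"
  and zero_notin_supp_mi: "multi_index a \<Longrightarrow> 0 \<notin> supp_mi a"
  unfolding multi_index_def supp_mi_def by auto

lemma mi_len_add: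
  assumes "multi_index a" "multi_index a'"
  shows "mi_len (\<lambda>j. a j + a' j) = mi_len a + mi_len a'"
proof -
  define U where "U = supp_mi a \<union> supp_mi a'"
  have "finite U" using assms unfolding U_def by (simp add: finite_supp_mi)
  have "supp_mi (\<lambda>j. a j + a' j) = U" unfolding U_def supp_mi_def by auto
  then have "mi_len (\<lambda>j. a j + a' j) = (\<Sum>j\<in>U. a j) + (\<Sum>j\<in>U. a' j)"
    unfolding mi_len_def by (simp add: sum.distrib)
  also have "(\<Sum>j\<in>U. a j) = mi_len a"
    unfolding mi_len_def using \<open>finite U\<close> by (auto intro!: sum.mono_neutral_right simp: U_def supp_mi_def)
  also have "(\<Sum>j\<in>U. a' j) = mi_len a'"
    unfolding mi_len_def using \<open>finite U\<close> by (auto intro!: sum.mono_neutral_right simp: U_def supp_mi_def)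
  finally show ?thesis .
qed

definition mi_list :: "(int \<Rightarrow> nat) \<Rightarrow> int \<Rightarrow> int list" where
  "mi_list a s = concat (map (\<lambda>j. replicate (a j) (s * \<bar>j\<bar>)) (sorted_list_of_set (supp_mi a)))"

lemma length_mi_list: "multi_index a \<Longrightarrow> length (mi_list a s) = mi_len a"
  unfolding mi_list_def mi_len_def
  by (simp add: length_concat comp_def sum_list_distinct_conv_sum_set finite_supp_mi)

lemma set_mi_list:
  "(\<And>j. j \<in> supp_mi a \<Longrightarrow> \<bar>j\<bar> \<le> int N) \<Longrightarrow> s \<in> {-1, 1} \<Longrightarrow> set (mi_list a s) \<subseteq> {- int N..int N}"
  unfolding mi_list_def supp_mi_def by (auto simp: abs_mult)

lemma signed_form_mi_list:
  assumes "multi_index a" "s \<in> {-1, 1}"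
  shows "signed_form (mi_list a s) \<rho> = of_int s * (\<Sum>j\<in>supp_mi a. real (a j) * \<rho> (nat \<bar>j\<bar>))"
proof -
  have "signed_form (mi_list a s) \<rho> = (\<Sum>j\<in>supp_mi a. signed_form (replicate (a j) (s * \<bar>j\<bar>)) \<rho>)"
    unfolding mi_list_def signed_form_concat using assms(1)
    by (simp add: comp_def sum_list_distinct_conv_sum_set finite_supp_mi)
  also have "\<dots> = (\<Sum>j\<in>supp_mi a. of_int s * (real (a j) * \<rho> (nat \<bar>j\<bar>)))"
  proof (intro sum.cong refl)
    fix j assume "j \<in> supp_mi a"
    then have "j \<noteq> 0" using zero_notin_supp_mi[OF assms(1)] by auto
    then have "sgn (s * \<bar>j\<bar>) = s" "nat \<bar>s * \<bar>j\<bar>\<bar> = nat \<bar>j\<bar>" using assms(2) by (auto simp: sgn_mult abs_mult)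
    then show "signed_form (replicate (a j) (s * \<bar>j\<bar>)) \<rho> = of_int s * (real (a j) * \<rho> (nat \<bar>j\<bar>))"
      by simp
  qed
  finally show ?thesis by (simp add: sum_distrib_left)
qed

lemma sum_abs_index_eq:
  fixes g :: "int \<Rightarrow> real"
  assumes "finite U" "\<And>j. j \<notin> U \<Longrightarrow> g j = 0" "1 \<le> n"
  shows "(\<Sum>j\<in>U. if nat \<bar>j\<bar> = n then g j else 0) = g (int n) + g (- int n)"
proof -
  have "(\<Sum>j\<in>U. if nat \<bar>j\<bar> = n then g j else 0) = (\<Sum>j\<in>U \<union> {int n, - int n}. if nat \<bar>j\<bar> = n then g j else 0)"
    using assms by (intro sum.mono_neutral_left) auto
  also have "\<dots> = (\<Sum>j\<in>{int n, - int n}. g j)"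
    using assms by (intro sum.mono_neutral_cong_right) auto
  also have "\<dots> = g (int n) + g (- int n)" using assms(3) by simp
  finally show ?thesis .
qed

lemma multi_index_pair_signed_form:
  assumes a: "multi_index a" and a': "multi_index a'" and len: "mi_len (\<lambda>j. a j + a' j) \<le> M"
    and not_sap: "\<not> super_action_preserving a a'"
  obtains L N where "L \<in> nontrivial_forms M N"
    "Max ((\<lambda>j. real_of_int \<bar>j\<bar>) ` (supp_mi a \<union> supp_mi a')) = real N"
    "\<And>\<rho>. signed_form L \<rho> = (\<Sum>j\<in>supp_mi a \<union> supp_mi a'. \<rho> (nat \<bar>j\<bar>) * (real (a j) - real (a' j)))"
proof -
  define U where "U = supp_mi a \<union> supp_mi a'"
  have "finite U" "0 \<notin> U" using a a' unfolding U_def by (auto simp: finite_supp_mi zero_notin_supp_mi)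
  have outside_U: "a j = 0 \<and> a' j = 0" if "j \<notin> U" for j using that unfolding U_def supp_mi_def by auto
  obtain n0 where n0: "1 \<le> n0" "a (int n0) + a (- int n0) \<noteq> a' (int n0) + a' (- int n0)"
    using not_sap unfolding super_action_preserving_def by auto
  then have "int n0 \<in> U \<or> - int n0 \<in> U" using outside_U by fastforce
  then have "U \<noteq> {}" by auto
  have "Max ((\<lambda>j. real_of_int \<bar>j\<bar>) ` U) \<in> (\<lambda>j. real_of_int \<bar>j\<bar>) ` U"
    using \<open>finite U\<close> \<open>U \<noteq> {}\<close> by (intro Max_in) auto
  then obtain j0 where "j0 \<in> U" and j0_max: "Max ((\<lambda>j. real_of_int \<bar>j\<bar>) ` U) = real_of_int \<bar>j0\<bar>"
    by auto
  define N where "N = nat \<bar>j0\<bar>"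
  have Max_eq: "Max ((\<lambda>j. real_of_int \<bar>j\<bar>) ` U) = real N" unfolding N_def j0_max by simp
  have bounded: "\<bar>j\<bar> \<le> int N" if "j \<in> U" for j
    using Max_ge[of "(\<lambda>j. real_of_int \<bar>j\<bar>) ` U" "real_of_int \<bar>j\<bar>"] \<open>finite U\<close> that
    unfolding Max_eq by auto
  define L where "L = mi_list a 1 @ mi_list a' (-1) @ replicate (M - (mi_len a + mi_len a')) 0"
  have "length L = M" unfolding L_def using length_mi_list[OF a] length_mi_list[OF a'] len mi_len_add[OF a a']
    by simp
  moreover have "set L \<subseteq> {- int N..int N}"
    unfolding L_def using set_mi_list[of a N 1] set_mi_list[of a' N "-1"] bounded by (auto simp: U_def)
  moreover have form: "signed_form L \<rho> = (\<Sum>j\<in>U. \<rho> (nat \<bar>j\<bar>) * (real (a j) - real (a' j)))" for \<rho>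
  proof -
    have "signed_form L \<rho> = (\<Sum>j\<in>supp_mi a. real (a j) * \<rho> (nat \<bar>j\<bar>)) - (\<Sum>j\<in>supp_mi a'. real (a' j) * \<rho> (nat \<bar>j\<bar>))"
      unfolding L_def using signed_form_mi_list[OF a, of 1 \<rho>] signed_form_mi_list[OF a', of "-1" \<rho>] by simp
    also have "(\<Sum>j\<in>supp_mi a. real (a j) * \<rho> (nat \<bar>j\<bar>)) = (\<Sum>j\<in>U. real (a j) * \<rho> (nat \<bar>j\<bar>))"
      using \<open>finite U\<close> by (auto intro!: sum.mono_neutral_left simp: U_def supp_mi_def)
    also have "(\<Sum>j\<in>supp_mi a'. real (a' j) * \<rho> (nat \<bar>j\<bar>)) = (\<Sum>j\<in>U. real (a' j) * \<rho> (nat \<bar>j\<bar>))"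
      using \<open>finite U\<close> by (auto intro!: sum.mono_neutral_left simp: U_def supp_mi_def)
    finally show ?thesis by (simp add: sum_subtractf[symmetric] algebra_simps)
  qed
  moreover have "\<exists>n\<in>{1..N}. signed_coeff L n \<noteq> 0"
  proof
    have "signed_coeff L n0 = (\<Sum>j\<in>U. if nat \<bar>j\<bar> = n0 then real (a j) - real (a' j) else 0)"
      unfolding signed_coeff_def form by (intro sum.cong) auto
    also have "\<dots> = (real (a (int n0)) + real (a (- int n0))) - (real (a' (int n0)) + real (a' (- int n0)))"
      using outside_U by (subst sum_abs_index_eq[OF \<open>finite U\<close> _ n0(1)]) auto
    finally show "signed_coeff L n0 \<noteq> 0" using n0(2) by (simp del: of_nat_add add: of_nat_add[symmetric])
    show "n0 \<in> {1..N}" using n0(1) bounded \<open>int n0 \<in> U \<or> - int n0 \<in> U\<close> by fastforce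
  qed
  ultimately show ?thesis using that[of L N] Max_eq unfolding nontrivial_forms_def U_def by auto
qed

lemma omega_sum_ge_if_not_resonant:
  assumes \<beta>: "\<beta> \<in> {\<beta>1..\<beta>2}" "\<beta> \<notin> resonant_set M \<beta>1 \<beta>2 k" and "0 < \<gamma>"
    and mi: "multi_index a" "multi_index a'" "mi_len (\<lambda>j. a j + a' j) \<le> M"
      "\<not> super_action_preserving a a'"
  shows "sqrt \<gamma> / 2 * (1 / real (Suc k)) ^ 2 ^ M /
      Max ((\<lambda>j. real_of_int \<bar>j\<bar>) ` (supp_mi a \<union> supp_mi a')) powr real (2 ^ M * (M + 4))
    \<le> \<bar>\<Sum>j\<in>supp_mi a \<union> supp_mi a'. omega \<beta> \<gamma> j * (real (a j) - real (a' j))\<bar>"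
proof -
  obtain L N where L: "L \<in> nontrivial_forms M N"
    and Max_eq: "Max ((\<lambda>j. real_of_int \<bar>j\<bar>) ` (supp_mi a \<union> supp_mi a')) = real N"
    and form: "\<And>\<rho>. signed_form L \<rho>
      = (\<Sum>j\<in>supp_mi a \<union> supp_mi a'. \<rho> (nat \<bar>j\<bar>) * (real (a j) - real (a' j)))"
    using multi_index_pair_signed_form[OF mi] by blast
  have "0 < N" using nontrivial_forms_pos[OF L] by simp
  have "sqrt \<gamma> / 2 * (1 / real (Suc k)) ^ 2 ^ M / real N powr real (2 ^ M * (M + 4))
      = sqrt \<gamma> / 2 * (1 / (real N ^ (M + 4) * real (Suc k))) ^ 2 ^ M"
  proof -
    have "real N powr real (2 ^ M * (M + 4)) = real N ^ (2 ^ M * (M + 4))"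
      using \<open>0 < N\<close> by (intro powr_realpow) simp
    also have "\<dots> = (real N ^ (M + 4)) ^ 2 ^ M" by (simp add: mult.commute flip: power_mult)
    finally show ?thesis by (simp add: power_divide power_mult_distrib)
  qed
  also have "\<dots> \<le> sqrt \<gamma> / 2 * \<bar>signed_form L (\<lambda>n. freq n \<beta>)\<bar>"
    using \<beta> L \<open>0 < \<gamma>\<close> unfolding resonant_set_def by (intro mult_left_mono) (auto simp: not_less)
  also have "\<dots> = \<bar>sqrt \<gamma> / 2 * signed_form L (\<lambda>n. freq n \<beta>)\<bar>" using \<open>0 < \<gamma>\<close> by (simp add: abs_mult)
  also have "sqrt \<gamma> / 2 * signed_form L (\<lambda>n. freq n \<beta>)
      = (\<Sum>j\<in>supp_mi a \<union> supp_mi a'. omega \<beta> \<gamma> j * (real (a j) - real (a' j)))"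
    unfolding form omega_eq_freq sum_distrib_left by (intro sum.cong refl) (simp add: field_simps)
  finally show ?thesis unfolding Max_eq .
qed

theorem proposition2p6:
  fixes M :: nat and \<beta>1 \<beta>2 :: real
  assumes "M \<ge> 1" and "0 < \<beta>1" and "\<beta>1 < \<beta>2" and "\<beta>2 < 4 * (2 + sqrt 3)"
  shows "\<exists>\<tau>::real. \<tau> > 0 \<and> (\<exists>B. B \<subseteq> {\<beta>1..\<beta>2} \<and> B \<in> null_sets lebesgue \<and>
     (\<forall>\<beta>\<in>{\<beta>1..\<beta>2} - B. \<forall>\<gamma>::real. \<gamma> > 0 \<longrightarrow>
        (\<exists>\<nu>::real. \<nu> > 0 \<and>
          (\<forall>a a'. multi_index a \<longrightarrow> multi_index a' \<longrightarrow>
             mi_len (\<lambda>j. a j + a' j) \<le> M \<longrightarrow> \<not> super_action_preserving a a' \<longrightarrow>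
             \<bar>\<Sum>j\<in>supp_mi a \<union> supp_mi a'. omega \<beta> \<gamma> j * (real (a j) - real (a' j))\<bar>
               \<ge> \<nu> / (Max ((\<lambda>j. real_of_int \<bar>j\<bar>) ` (supp_mi a \<union> supp_mi a'))) powr \<tau>))))"
proof -
  have "sqrt 3 < sqrt ((7/4)\<^sup>2)" by (intro real_sqrt_less_mono) (simp add: power2_eq_square)
  then have "\<beta>2 \<le> 15" using assms(4) by simp
  then obtain C where C: "\<And>k. emeasure lborel (resonant_set M \<beta>1 \<beta>2 k) \<le> ennreal (C / real (Suc k))"
    using emeasure_resonant_set_le assms(2,3) by (metis less_imp_le)
  define B where "B = (\<Inter>k. resonant_set M \<beta>1 \<beta>2 k)"
  have null: "B \<in> null_sets lebesgue"
    unfolding B_def using null_sets_INT_if_emeasure_le[OF sets_resonant_set C]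
    by (rule null_sets_completionI)
  have "B \<subseteq> {\<beta>1..\<beta>2}" unfolding B_def resonant_set_def by auto
  have bound: "\<exists>\<nu>>0. \<forall>a a'. multi_index a \<longrightarrow> multi_index a' \<longrightarrow>
      mi_len (\<lambda>j. a j + a' j) \<le> M \<longrightarrow> \<not> super_action_preserving a a' \<longrightarrow>
      \<nu> / Max ((\<lambda>j. real_of_int \<bar>j\<bar>) ` (supp_mi a \<union> supp_mi a')) powr real (2 ^ M * (M + 4))
        \<le> \<bar>\<Sum>j\<in>supp_mi a \<union> supp_mi a'. omega \<beta> \<gamma> j * (real (a j) - real (a' j))\<bar>"
    if "\<beta> \<in> {\<beta>1..\<beta>2} - B" "0 < \<gamma>" for \<beta> \<gamma>
  proof -
    have "\<beta> \<notin> B" using that(1) by simp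
    then obtain k where "\<beta> \<notin> resonant_set M \<beta>1 \<beta>2 k" unfolding B_def by auto
    then show ?thesis
      using that omega_sum_ge_if_not_resonant[of \<beta> \<beta>1 \<beta>2 M k \<gamma>]
      by (intro exI[of _ "sqrt \<gamma> / 2 * (1 / real (Suc k)) ^ 2 ^ M"]) auto
  qed
  show ?thesis
    by (intro exI[of _ "real (2 ^ M * (M + 4))"] conjI exI[of _ B] ballI allI impI bound)
      (use null \<open>B \<subseteq> {\<beta>1..\<beta>2}\<close> in auto)
qed

end
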